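(* Let $a>0$, $\theta\ge 0$, $L>0$ and $\lambda\in(\tfrac12,1)$ be given. Assume that the feedback parameter $k$ satisfies $$k\ge \max\Big\{1,\ \tfrac43\Big(\tfrac1a+\tfrac1{a^2}\Big),\ \tfrac{1}{\lambda a}\Big\}.$$ Define $$\mu=\frac{1}{4\,\mathrm{e}\,L\,k},\qquad C_0=12k+4(k+1)\Big(18+13\theta+\tfrac{1}{a^2}(8+6\theta)\Big)+10,$$ $$M_1=\min\Big\{\tfrac34 k a^2-a-1,\ k-1\Big\},\qquad K_1=\frac{1+2L^2}{M_1}.$$ Let $\bar u\in C^1([0,L])$ with $\bar u(x)>0$ be a stationary state, i.e. a solution of $\bar u_x=\frac{\theta}{2}\,\frac{|\bar u|\,\bar u^2}{a^2-\bar u^2}$, and assume that for all $x\in[0,L]$ $$\bar u(x)\le \min\Big\{1,\ \tfrac{1}{4k\mathrm{e}},\ (1-\lambda)\tfrac a2,\ \tfrac{\mu}{C_0K_1}\Big\},\qquad \bar u_x(x)\le \min\Big\{1,\ \tfrac{\mu}{C_0K_1}\Big\}.$$ Let $T_{period}>0$ and $T>T_{period}$ be given, and let $\omega$ be fixed with $b(\cdot,\omega)\in C^2([0,T])$. Let $u\in C^2([0,T]\times[0,L])$ be a solution of the system $$\begin{cases} u(0,x)=\varphi(x),\quad u_t(0,x)=\psi(x), & x\in[0,L],\\ u_{tt}+2(\bar u+u)u_{tx}-\big(a^2-(\bar u+u)^2\big)u_{xx}=F(x,u,u_x,u_t) & \text{on }[0,T]\times[0,L],\\ u_x(t,0)=k\,u_t(t,0),\quad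 u(t,L)=b(t,\omega), & t\in[0,T],\end{cases}$$ (with $C^2$ initial data $\varphi\in C^2([0,L])$, $\psi\in C^1([0,L])$ compatible with the boundary conditions), where $$F=\tilde F(u+\bar u,\,u_x+\bar u_x,\,u_t)-\frac{a^2-(\bar u+u)^2}{a^2-\bar u^2}\,\tilde F(\bar u,\bar u_x,0),$$ $$\tilde F(v,v_x,v_t)=-2v_tv_x-2v\,v_x^2-\tfrac32\theta\, v|v|\,v_x-\theta|v|\,v_t,$$ and assume this solution satisfies on $[0,T]\times[0,L]$ $$|u|\le\min\Big\{\bar u(0),\ (1-\lambda)\tfrac a2,\ \tfrac{1}{4k\mathrm{e}}\Big\},\qquad \max\{|u|,|u_x|,|u_t|\}\le\min\Big\{1,\ \tfrac{\mu}{C_0K_1}\Big\}.$$ Assume that there exist $\nu>\mu$ and $C_\nu>0$ such that for all $t\in(T_{period},T)$ $$\int_{t-T_{period}}^t |b(\tau,\omega)|^2+|b_t(\tau,\omega)|^2\,d\tau\le C_\nu\exp(-\nu t),$$ and set $\delta=\nu-\mu>0$ and $C_g=\Big(\tfrac43\mathrm{e}\,a^2k^2+\tfrac{1}{2\mathrm{e}K_1k}\Big)C_\nu$. Define $$E_1(t)=\int_0^L k\Big[\big(a^2-(\bar u+u)^2\big)u_x^2+u_t^2\Big]-2\exp\Big(-\tfrac xL\Big)\Big[(\bar u+u)u_x^2+u_tu_x\Big]dx,\qquad E(t)=\int_{t-T_{period}}^tE_1(\tau)\,d\tau .$$ Then for all $t\in(T_{period},T)$ $$E(t)\le \exp\big(-\mu(t-T_{period})\big)\Big[E(T_{period})+\frac{C_g}{\delta}\Big].$$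 Moreover, if $b(t,\omega)=0$ for all $t\ge T-T_{period}$, then $$\|u\|^2_{H^1((T-T_{period},T)\times(0,L))}\le K_1\exp\big(-\mu(T-T_{period})\big)\Big[E(T_{period})+\frac{C_g}{\delta}\Big].$$
   Context: The system models subsonic isothermal gas flow in a pipe of length $L$: $u=\tilde u-\bar u$ is the deviation of the gas velocity $\tilde u$ from a stationary velocity profile $\bar u$, $a>0$ is the speed of sound, $\theta\ge0$ a friction coefficient, $k>0$ the feedback parameter of the Neumann feedback at $x=0$, and $b(t,\omega)$ models uncertain customer behavior at $x=L$ depending on an uncertain parameter $\omega$. $\mathrm{e}$ denotes Euler's number. *)

theory Defs
  imports "HOL-Analysis.Analysis"
begin

definition mu_c :: "real \<Rightarrow> real \<Rightarrow> real" where
  "mu_c L k = 1 / (4 * exp 1 * L * k)"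

definition C0_c :: "real \<Rightarrow> real \<Rightarrow> real \<Rightarrow> real" where
  "C0_c a \<theta> k = 12 * k + 4 * (k + 1) * (18 + 13 * \<theta> + (1 / a\<^sup>2) * (8 + 6 * \<theta>)) + 10"

definition M1_c :: "real \<Rightarrow> real \<Rightarrow> real" where
  "M1_c a k = min (3/4 * k * a\<^sup>2 - a - 1) (k - 1)"

definition K1_c :: "real \<Rightarrow> real \<Rightarrow> real \<Rightarrow> real" where
  "K1_c a L k = (1 + 2 * L\<^sup>2) / M1_c a k"

definition Ftil :: "real \<Rightarrow> real \<Rightarrow> real \<Rightarrow> real \<Rightarrow> real" where
  "Ftil \<theta> v vx vt = - 2 * vt * vx - 2 * v * vx\<^sup>2 - 3/2 * \<theta> * v * \<bar>v\<bar> * vx - \<theta> * \<bar>v\<bar> * vt"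

definition Fsrc :: "real \<Rightarrow> real \<Rightarrow> real \<Rightarrow> real \<Rightarrow> real \<Rightarrow> real \<Rightarrow> real \<Rightarrow> real" where
  "Fsrc a \<theta> ub ubx w wx wt =
     Ftil \<theta> (w + ub) (wx + ubx) wt
     - (a\<^sup>2 - (ub + w)\<^sup>2) / (a\<^sup>2 - ub\<^sup>2) * Ftil \<theta> ub ubx 0"

definition E1 :: "real \<Rightarrow> real \<Rightarrow> real \<Rightarrow> (real \<Rightarrow> real) \<Rightarrow> (real \<Rightarrow> real \<Rightarrow> real)
    \<Rightarrow> (real \<Rightarrow> real \<Rightarrow> real) \<Rightarrow> (real \<Rightarrow> real \<Rightarrow> real) \<Rightarrow> real \<Rightarrow> real" where
  "E1 a L k ub u ux ut t =
     integral {0..L} (\<lambda>x. k * ((a\<^sup>2 - (ub x + u t x)\<^sup>2) * (ux t x)\<^sup>2 + (ut t x)\<^sup>2)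
        - 2 * exp (- x / L) * ((ub x + u t x) * (ux t x)\<^sup>2 + ut t x * ux t x))"

definition Een :: "real \<Rightarrow> real \<Rightarrow> real \<Rightarrow> real \<Rightarrow> (real \<Rightarrow> real) \<Rightarrow> (real \<Rightarrow> real \<Rightarrow> real)
    \<Rightarrow> (real \<Rightarrow> real \<Rightarrow> real) \<Rightarrow> (real \<Rightarrow> real \<Rightarrow> real) \<Rightarrow> real \<Rightarrow> real" where
  "Een a L k Tp ub u ux ut t = integral {t - Tp..t} (\<lambda>\<tau>. E1 a L k ub u ux ut \<tau>)"

text \<open>Squared \<open>H^1\<close> norm on \<open>(t0,t1) \<times> (0,L)\<close> of a function with partial derivatives ux, ut.\<close>
definition H1sq :: "real \<Rightarrow> real \<Rightarrow> real \<Rightarrow> (real \<Rightarrow> real \<Rightarrow> real) \<Rightarrow> (real \<Rightarrow> real \<Rightarrow> real)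
    \<Rightarrow> (real \<Rightarrow> real \<Rightarrow> real) \<Rightarrow> real" where
  "H1sq t0 t1 L u ux ut =
     integral ({t0..t1} \<times> {0..L}) (\<lambda>(t, x). (u t x)\<^sup>2 + (ux t x)\<^sup>2 + (ut t x)\<^sup>2)"

end

theory Submission
  imports Defs
begin

text \<open>
  The energy \<open>E\<^sub>1\<close> is a Lyapunov function. Differentiating it in time and eliminating
  \<open>u\<^sub>t\<^sub>t\<close> by the equation writes \<open>\<partial>\<^sub>t\<close> of its density as the \<open>x\<close>-derivative of a flux,
  plus a damping term coming from the weight \<open>exp (- x / L)\<close>, plus a remainder that is cubic
  in the small quantities \<open>u\<^sub>s, \<partial>\<^sub>xu\<^sub>s, u, u\<^sub>x, u\<^sub>t\<close> (\<open>u\<^sub>s\<close> the stationary state).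
  The feedback condition makes the flux nonnegative at \<open>x = 0\<close>, and at \<open>x = L\<close> it is controlled by
  \<open>b\<^sub>t\<^sup>2\<close>. The damping is at least \<open>2 \<mu> E\<^sub>1\<close>, while the remainder is at most \<open>\<mu> / K\<^sub>1\<close> times
  the squared \<open>H\<^sup>1\<close> density, which a Poincare inequality anchored at \<open>x = L\<close> bounds by
  \<open>2 L b\<^sup>2 + K\<^sub>1 E\<^sub>1\<close>. Hence \<open>E\<^sub>1' \<le> - \<mu> E\<^sub>1 + C\<^sub>g (b\<^sup>2 + b\<^sub>t\<^sup>2)\<close>; integrating over a window of length
  \<open>T\<^sub>p\<^sub>e\<^sub>r\<^sub>i\<^sub>o\<^sub>d\<close> and applying Gronwall's lemma against the decay of the data gives the bound on
  \<open>E\<close>, and the \<open>H\<^sup>1\<close> bound follows once \<open>b\<close> vanishes on the last window.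
\<close>

section \<open>Pointwise estimates\<close>

text \<open>
  Here \<open>c, d, w, X, Y\<close> stand for the values of \<open>u\<^sub>s, \<partial>\<^sub>xu\<^sub>s, u, u\<^sub>x, u\<^sub>t\<close> at one point,
  \<open>\<rho>\<close> for the weight \<open>exp (- x / L)\<close>, \<open>V\<close> for \<open>u\<^sub>s + u\<close> and \<open>A\<close> for \<open>a\<^sup>2 - V\<^sup>2\<close>.
\<close>

lemma power2_le_mult_abs: "\<bar>x::real\<bar> \<le> s \<Longrightarrow> \<bar>x\<bar> \<le> 1 \<Longrightarrow> x\<^sup>2 \<le> s * \<bar>x\<bar>"
  by (metis abs_ge_zero abs_mult_self_eq mult_right_mono power2_eq_square)

lemma abs_mult_le_of_power2_le:
  assumes "(p::real)\<^sup>2 \<le> Q" "q\<^sup>2 \<le> Q"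
  shows "\<bar>p\<bar> * \<bar>q\<bar> \<le> Q"
proof -
  have "0 \<le> (\<bar>p\<bar> - \<bar>q\<bar>)\<^sup>2" by simp
  hence "2 * (\<bar>p\<bar> * \<bar>q\<bar>) \<le> p\<^sup>2 + q\<^sup>2" by (simp add: power2_eq_square algebra_simps)
  thus ?thesis using assms by linarith
qed

lemma Fsrc_expand:
  fixes a \<theta> c d w X Y :: real
  assumes "c + w \<ge> 0" "c > 0" "a\<^sup>2 - c\<^sup>2 \<noteq> 0"
  shows "Fsrc a \<theta> c d w X Y = -2 * Y * (X + d) - \<theta> * (c + w) * Y
     - 2 * (w * d\<^sup>2 + (c + w) * (2 * d * X + X\<^sup>2))
     - 3/2 * \<theta> * ((2 * c * w + w\<^sup>2) * d + (c + w)\<^sup>2 * X)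
     + (2 * c * w + w\<^sup>2) / (a\<^sup>2 - c\<^sup>2) * (-2 * c * d\<^sup>2 - 3/2 * \<theta> * c\<^sup>2 * d)"
proof -
  have r: "(a\<^sup>2 - (c + w)\<^sup>2) / (a\<^sup>2 - c\<^sup>2) = 1 - (2 * c * w + w\<^sup>2) / (a\<^sup>2 - c\<^sup>2)"
    using assms by (simp add: field_simps power2_eq_square)
  have ab: "\<bar>w + c\<bar> = c + w" "\<bar>c\<bar> = c" using assms by auto
  show ?thesis
    unfolding Fsrc_def Ftil_def r ab by (simp add: algebra_simps power2_eq_square)
qed

locale small_state =
  fixes \<theta> a c d w X Y s :: real
  assumes theta_nonneg: "\<theta> \<ge> 0" and a_pos: "a > 0"
    and c: "0 < c" "c \<le> 1" "c \<le> s" "c \<le> a / 4"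
    and d: "0 \<le> d" "d \<le> 1" "d \<le> s"
    and w: "\<bar>w\<bar> \<le> c" "\<bar>w\<bar> \<le> 1" "\<bar>w\<bar> \<le> s"
    and X: "\<bar>X\<bar> \<le> 1" "\<bar>X\<bar> \<le> s"
    and Y: "\<bar>Y\<bar> \<le> 1" "\<bar>Y\<bar> \<le> s"
begin

lemma flow_bounds: "0 \<le> c + w" "c + w \<le> 2" "c + w \<le> 2 * s" "0 \<le> s"
  using c w by auto

lemma d_plus_X_bound: "\<bar>d + X\<bar> \<le> 2 * s"
  using d X by auto

lemma power2_d_le: "d\<^sup>2 \<le> s"
  using power2_le_mult_abs[of d s] d mult_left_le[of "\<bar>d\<bar>" s] flow_bounds(4) by auto

lemma stationary_denominator: "a\<^sup>2 - c\<^sup>2 \<ge> 3/4 * a\<^sup>2"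
proof -
  have "c * c \<le> (a / 4) * (a / 4)" using c by (intro mult_mono) auto
  hence "c\<^sup>2 \<le> a\<^sup>2 / 16" by (simp add: power2_eq_square)
  thus ?thesis using zero_le_power2[of a] by linarith
qed

lemma abs_cross_term_le: "\<bar>2 * c * w + w\<^sup>2\<bar> \<le> 3 * \<bar>w\<bar>"
proof -
  have "\<bar>2 * c * w\<bar> \<le> 2 * \<bar>w\<bar>" using c by (simp add: abs_mult mult_right_mono)
  moreover have "w\<^sup>2 \<le> 1 * \<bar>w\<bar>" using w power2_le_mult_abs by blast
  ultimately show ?thesis using abs_triangle_ineq[of "2 * c * w" "w\<^sup>2"] by simp
qed

lemma Fsrc_term1_le: "\<bar>-2 * Y * (X + d)\<bar> \<le> 4 * s * \<bar>Y\<bar>"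
proof -
  have "\<bar>-2 * Y * z\<bar> \<le> 4 * s * \<bar>Y\<bar>" if "\<bar>z\<bar> \<le> 2 * s" for z
    using mult_left_mono[OF that, of "\<bar>Y\<bar>"] by (simp add: abs_mult mult_ac)
  thus ?thesis using d_plus_X_bound by (simp add: add.commute)
qed

lemma Fsrc_term2_le: "\<bar>\<theta> * (c + w) * Y\<bar> \<le> 2 * \<theta> * s * \<bar>Y\<bar>"
proof -
  have "\<theta> * (c + w) * \<bar>Y\<bar> \<le> \<theta> * (2 * s) * \<bar>Y\<bar>"
    using flow_bounds theta_nonneg by (intro mult_right_mono mult_left_mono) auto
  thus ?thesis using flow_bounds theta_nonneg by (simp add: abs_mult)
qed

lemma Fsrc_term3_le:
  "\<bar>2 * (w * d\<^sup>2 + (c + w) * (2 * d * X + X\<^sup>2))\<bar> \<le> 2 * s * \<bar>w\<bar> + 12 * s * \<bar>X\<bar>"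
proof -
  define Z where "Z = w * d\<^sup>2 + (c + w) * (2 * d * X + X\<^sup>2)"
  have wd: "\<bar>w * d\<^sup>2\<bar> \<le> s * \<bar>w\<bar>"
    using power2_d_le mult_left_mono[of "d\<^sup>2" s "\<bar>w\<bar>"] by (simp add: abs_mult mult.commute)
  have "\<bar>2 * d * X\<bar> \<le> 2 * s * \<bar>X\<bar>" using d by (simp add: abs_mult mult_right_mono)
  moreover have "X\<^sup>2 \<le> s * \<bar>X\<bar>" using X power2_le_mult_abs by blast
  ultimately have "\<bar>2 * d * X + X\<^sup>2\<bar> \<le> 3 * s * \<bar>X\<bar>"
    using abs_triangle_ineq[of "2 * d * X" "X\<^sup>2"] by simp
  hence "(c + w) * \<bar>2 * d * X + X\<^sup>2\<bar> \<le> 2 * (3 * s * \<bar>X\<bar>)"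
    using flow_bounds by (intro mult_mono) auto
  hence "\<bar>(c + w) * (2 * d * X + X\<^sup>2)\<bar> \<le> 6 * s * \<bar>X\<bar>"
    using flow_bounds by (simp add: abs_mult)
  hence "\<bar>Z\<bar> \<le> s * \<bar>w\<bar> + 6 * s * \<bar>X\<bar>"
    using wd abs_triangle_ineq[of "w * d\<^sup>2" "(c + w) * (2 * d * X + X\<^sup>2)"] unfolding Z_def by simp
  thus ?thesis unfolding Z_def[symmetric] by (simp add: abs_mult)
qed

lemma Fsrc_term4_le:
  "\<bar>3/2 * \<theta> * ((2 * c * w + w\<^sup>2) * d + (c + w)\<^sup>2 * X)\<bar> \<le> 9/2 * \<theta> * s * \<bar>w\<bar> + 6 * \<theta> * s * \<bar>X\<bar>"
proof -
  define Z where "Z = (2 * c * w + w\<^sup>2) * d + (c + w)\<^sup>2 * X"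
  have "\<bar>(2 * c * w + w\<^sup>2) * d\<bar> \<le> 3 * \<bar>w\<bar> * s"
    using abs_cross_term_le d by (simp add: abs_mult mult_mono)
  moreover have "\<bar>(c + w)\<^sup>2 * X\<bar> \<le> 4 * s * \<bar>X\<bar>"
  proof -
    have "(c + w) * (c + w) \<le> 2 * (2 * s)" using flow_bounds by (intro mult_mono) auto
    thus ?thesis by (simp add: abs_mult mult_right_mono power2_eq_square)
  qed
  ultimately have "\<bar>Z\<bar> \<le> 3 * s * \<bar>w\<bar> + 4 * s * \<bar>X\<bar>"
    using abs_triangle_ineq[of "(2 * c * w + w\<^sup>2) * d" "(c + w)\<^sup>2 * X"] unfolding Z_def by (simp add: mult_ac)
  hence "3/2 * \<theta> * \<bar>Z\<bar> \<le> 3/2 * \<theta> * (3 * s * \<bar>w\<bar> + 4 * s * \<bar>X\<bar>)"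
    using theta_nonneg by (simp add: mult_left_mono)
  thus ?thesis unfolding Z_def[symmetric] using theta_nonneg by (simp add: abs_mult algebra_simps)
qed

lemma Fsrc_term5_le:
  "\<bar>(2 * c * w + w\<^sup>2) / (a\<^sup>2 - c\<^sup>2) * (-2 * c * d\<^sup>2 - 3/2 * \<theta> * c\<^sup>2 * d)\<bar> \<le> (8 + 6 * \<theta>) / a\<^sup>2 * s * \<bar>w\<bar>"
proof -
  have "c * d\<^sup>2 \<le> 1 * s" using c d power2_d_le by (intro mult_mono) auto
  moreover have "c\<^sup>2 * d \<le> 1 * s" using c d by (intro mult_mono) (auto simp: power_le_one)
  moreover have "0 \<le> c * d\<^sup>2" "0 \<le> \<theta> * (c\<^sup>2 * d)" using c d theta_nonneg by auto
  ultimately have g: "\<bar>-2 * c * d\<^sup>2 - 3/2 * \<theta> * c\<^sup>2 * d\<bar> \<le> (2 + 3/2 * \<theta>) * s"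
    using mult_left_mono[of "c\<^sup>2 * d" s \<theta>] theta_nonneg by (simp add: algebra_simps)
  have a2: "a\<^sup>2 > 0" using a_pos by simp
  have "\<bar>2 * c * w + w\<^sup>2\<bar> / (a\<^sup>2 - c\<^sup>2) \<le> 3 * \<bar>w\<bar> / (3/4 * a\<^sup>2)"
    using abs_cross_term_le stationary_denominator a2 by (intro frac_le) auto
  hence "\<bar>2 * c * w + w\<^sup>2\<bar> / (a\<^sup>2 - c\<^sup>2) * \<bar>-2 * c * d\<^sup>2 - 3/2 * \<theta> * c\<^sup>2 * d\<bar>
          \<le> 3 * \<bar>w\<bar> / (3/4 * a\<^sup>2) * ((2 + 3/2 * \<theta>) * s)"
    using g a2 by (intro mult_mono) auto
  also have "\<dots> = (8 + 6 * \<theta>) / a\<^sup>2 * s * \<bar>w\<bar>" using a_pos by (simp add: field_simps)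
  finally have "\<bar>2 * c * w + w\<^sup>2\<bar> / (a\<^sup>2 - c\<^sup>2) * \<bar>-2 * c * d\<^sup>2 - 3/2 * \<theta> * c\<^sup>2 * d\<bar>
      \<le> (8 + 6 * \<theta>) / a\<^sup>2 * s * \<bar>w\<bar>" .
  moreover have "a\<^sup>2 - c\<^sup>2 > 0" using stationary_denominator a2 by linarith
  ultimately show ?thesis by (simp add: abs_mult)
qed

lemma abs_Fsrc_le:
  "\<bar>Fsrc a \<theta> c d w X Y\<bar>
     \<le> s * ((4 + 2 * \<theta>) * \<bar>Y\<bar> + (2 + 9/2 * \<theta> + (8 + 6 * \<theta>) / a\<^sup>2) * \<bar>w\<bar> + (12 + 6 * \<theta>) * \<bar>X\<bar>)"
proof -
  have triangle: "\<bar>p - q - r - t + z\<bar> \<le> \<bar>p\<bar> + \<bar>q\<bar> + \<bar>r\<bar> + \<bar>t\<bar> + \<bar>z\<bar>" for p q r t z :: real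
    by (simp add: abs_triangle_ineq abs_triangle_ineq4 add_mono order_trans)
  have "a\<^sup>2 > 0" using a_pos by simp
  hence den: "a\<^sup>2 - c\<^sup>2 \<noteq> 0" using stationary_denominator by linarith
  have "\<bar>Fsrc a \<theta> c d w X Y\<bar> \<le> \<bar>-2 * Y * (X + d)\<bar> + \<bar>\<theta> * (c + w) * Y\<bar>
      + \<bar>2 * (w * d\<^sup>2 + (c + w) * (2 * d * X + X\<^sup>2))\<bar>
      + \<bar>3/2 * \<theta> * ((2 * c * w + w\<^sup>2) * d + (c + w)\<^sup>2 * X)\<bar>
      + \<bar>(2 * c * w + w\<^sup>2) / (a\<^sup>2 - c\<^sup>2) * (-2 * c * d\<^sup>2 - 3/2 * \<theta> * c\<^sup>2 * d)\<bar>"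
    unfolding Fsrc_expand[OF flow_bounds(1) c(1) den] by (rule triangle)
  also have "\<dots> \<le> 4 * s * \<bar>Y\<bar> + 2 * \<theta> * s * \<bar>Y\<bar> + (2 * s * \<bar>w\<bar> + 12 * s * \<bar>X\<bar>)
     + (9/2 * \<theta> * s * \<bar>w\<bar> + 6 * \<theta> * s * \<bar>X\<bar>) + (8 + 6 * \<theta>) / a\<^sup>2 * s * \<bar>w\<bar>"
    using Fsrc_term1_le Fsrc_term2_le Fsrc_term3_le Fsrc_term4_le Fsrc_term5_le by linarith
  finally show ?thesis by (simp add: algebra_simps)
qed
lemma abs_weighted_Fsrc_le:
  assumes k: "k \<ge> 1" and \<rho>: "0 \<le> \<rho>" "\<rho> \<le> 1"
  shows "\<bar>2 * (k * Y - \<rho> * X) * Fsrc a \<theta> c d w X Y\<bar>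
    \<le> 2 * (k + 1) * (18 + 13 * \<theta> + (8 + 6 * \<theta>) / a\<^sup>2) * s * (w\<^sup>2 + X\<^sup>2 + Y\<^sup>2)"
proof -
  define Q where "Q = w\<^sup>2 + X\<^sup>2 + Y\<^sup>2"
  define c0 where "c0 = 18 + 13 * \<theta> + (8 + 6 * \<theta>) / a\<^sup>2"
  define S where "S = (4 + 2 * \<theta>) * \<bar>Y\<bar> + (2 + 9/2 * \<theta> + (8 + 6 * \<theta>) / a\<^sup>2) * \<bar>w\<bar> + (12 + 6 * \<theta>) * \<bar>X\<bar>"
  have Qs: "w\<^sup>2 \<le> Q" "X\<^sup>2 \<le> Q" "Y\<^sup>2 \<le> Q" "0 \<le> Q" unfolding Q_def by auto
  have pS: "\<bar>p\<bar> * S \<le> c0 * Q" if "p\<^sup>2 \<le> Q" for p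
  proof -
    have "\<bar>p\<bar> * S = (4 + 2 * \<theta>) * (\<bar>p\<bar> * \<bar>Y\<bar>) + (2 + 9/2 * \<theta> + (8 + 6 * \<theta>) / a\<^sup>2) * (\<bar>p\<bar> * \<bar>w\<bar>)
        + (12 + 6 * \<theta>) * (\<bar>p\<bar> * \<bar>X\<bar>)"
      unfolding S_def by (simp add: algebra_simps)
    also have "\<dots> \<le> (4 + 2 * \<theta>) * Q + (2 + 9/2 * \<theta> + (8 + 6 * \<theta>) / a\<^sup>2) * Q + (12 + 6 * \<theta>) * Q"
      using abs_mult_le_of_power2_le[OF that] Qs theta_nonneg by (intro add_mono mult_left_mono) auto
    also have "\<dots> = (18 + 25/2 * \<theta> + (8 + 6 * \<theta>) / a\<^sup>2) * Q" by (simp add: algebra_simps)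
    also have "\<dots> \<le> c0 * Q"
      unfolding c0_def using theta_nonneg Qs(4) by (intro mult_right_mono) auto
    finally show ?thesis .
  qed
  have "\<bar>k * Y - \<rho> * X\<bar> \<le> k * \<bar>Y\<bar> + \<bar>X\<bar>"
    using k \<rho> abs_triangle_ineq4[of "k * Y" "\<rho> * X"] mult_left_le_one_le[of "\<bar>X\<bar>" \<rho>]
    by (simp add: abs_mult)
  hence "\<bar>k * Y - \<rho> * X\<bar> * \<bar>Fsrc a \<theta> c d w X Y\<bar> \<le> (k * \<bar>Y\<bar> + \<bar>X\<bar>) * (s * S)"
    using abs_Fsrc_le unfolding S_def by (intro mult_mono) auto
  also have "\<dots> = s * (k * (\<bar>Y\<bar> * S) + \<bar>X\<bar> * S)" by (simp add: algebra_simps)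
  also have "\<dots> \<le> s * (k * (c0 * Q) + c0 * Q)"
    using pS[OF Qs(3)] pS[OF Qs(2)] k flow_bounds(4) by (intro mult_left_mono add_mono) auto
  also have "\<dots> = (k + 1) * c0 * s * Q" by (simp add: algebra_simps)
  finally have "\<bar>k * Y - \<rho> * X\<bar> * \<bar>Fsrc a \<theta> c d w X Y\<bar> \<le> (k + 1) * c0 * s * Q" .
  moreover have "\<bar>2 * (k * Y - \<rho> * X) * Fsrc a \<theta> c d w X Y\<bar>
      = 2 * (\<bar>k * Y - \<rho> * X\<bar> * \<bar>Fsrc a \<theta> c d w X Y\<bar>)"
    by (simp only: abs_mult abs_numeral mult.assoc)
  ultimately show ?thesis unfolding Q_def c0_def by linarith
qed

lemma cubic_terms_le:
  assumes k: "k \<ge> 1" and \<rho>: "0 \<le> \<rho>" "\<rho> \<le> 1"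
  shows "- 2 * k * (c + w) * Y * X\<^sup>2 + 4 * k * (c + w) * (d + X) * Y * X + 2 * k * (d + X) * Y\<^sup>2
      - 2 * \<rho> * Y * X\<^sup>2 - 2 * \<rho> * (c + w) * (d + X) * X\<^sup>2 \<le> (24 * k + 10) * s * (w\<^sup>2 + X\<^sup>2 + Y\<^sup>2)"
proof -
  define Q where "Q = w\<^sup>2 + X\<^sup>2 + Y\<^sup>2"
  define V where "V = c + w"
  have Qs: "X\<^sup>2 \<le> Q" "Y\<^sup>2 \<le> Q" "\<bar>Y\<bar> * \<bar>X\<bar> \<le> Q"
    using abs_mult_le_of_power2_le[of Y Q X] unfolding Q_def by auto
  have V: "0 \<le> V" "V \<le> 2" unfolding V_def using flow_bounds by auto
  have dX: "\<bar>d + X\<bar> \<le> 2 * s" by (rule d_plus_X_bound)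
  have mono3: "x * y * z \<le> x' * y' * z'"
    if "0 \<le> x" "x \<le> x'" "0 \<le> y" "y \<le> y'" "0 \<le> z" "z \<le> z'" for x y z x' y' z' :: real
    using that by (meson mult_mono order_trans mult_nonneg_nonneg)
  have "V * \<bar>Y\<bar> * X\<^sup>2 \<le> 2 * s * Q" using V Y Qs by (intro mono3) auto
  hence t1: "\<bar>2 * k * V * Y * X\<^sup>2\<bar> \<le> 4 * k * s * Q"
    using V k mult_left_mono[of _ _ k] by (simp add: abs_mult mult_ac)
  have t2: "\<bar>4 * k * V * z * Y * X\<bar> \<le> 16 * k * s * Q" if z: "\<bar>z\<bar> \<le> 2 * s" for z
  proof -
    have "V * \<bar>z\<bar> * (\<bar>Y\<bar> * \<bar>X\<bar>) \<le> 2 * (2 * s) * Q" by (rule mono3) (use V z Qs in auto)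
    hence "4 * k * (V * \<bar>z\<bar> * (\<bar>Y\<bar> * \<bar>X\<bar>)) \<le> 4 * k * (2 * (2 * s) * Q)"
      using k by (intro mult_left_mono) auto
    thus ?thesis using V k by (simp add: abs_mult mult_ac)
  qed
  have t3: "\<bar>2 * k * z * Y\<^sup>2\<bar> \<le> 4 * k * s * Q" if z: "\<bar>z\<bar> \<le> 2 * s" for z
  proof -
    have "\<bar>z\<bar> * Y\<^sup>2 \<le> (2 * s) * Q" by (rule mult_mono) (use z Qs in auto)
    hence "2 * k * (\<bar>z\<bar> * Y\<^sup>2) \<le> 2 * k * ((2 * s) * Q)" using k by (intro mult_left_mono) auto
    thus ?thesis using k by (simp add: abs_mult mult_ac)
  qed
  have "\<rho> * \<bar>Y\<bar> * X\<^sup>2 \<le> 1 * s * Q" by (rule mono3) (use \<rho> Y Qs in auto)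
  hence t4: "\<bar>2 * \<rho> * Y * X\<^sup>2\<bar> \<le> 2 * s * Q" using \<rho> by (simp add: abs_mult mult_ac)
  have t5: "\<bar>2 * \<rho> * V * z * X\<^sup>2\<bar> \<le> 8 * s * Q" if z: "\<bar>z\<bar> \<le> 2 * s" for z
  proof -
    have \<rho>V: "\<rho> * V \<le> 1 * 2" by (rule mult_mono) (use \<rho> V in auto)
    have "(\<rho> * V) * \<bar>z\<bar> * X\<^sup>2 \<le> (1 * 2) * (2 * s) * Q" by (rule mono3) (use \<rho>V \<rho> V z Qs in auto)
    thus ?thesis using \<rho> V by (simp add: abs_mult mult_ac)
  qed
  have "(24 * k + 10) * s * Q = 4 * k * s * Q + 16 * k * s * Q + 4 * k * s * Q + 2 * s * Q + 8 * s * Q"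
    by (simp add: algebra_simps)
  thus ?thesis using t1 t2[OF dX] t3[OF dX] t4 t5[OF dX] unfolding Q_def[symmetric] V_def[symmetric] by linarith
qed

lemma energy_remainder_le:
  assumes k: "k \<ge> 1" and \<rho>: "0 \<le> \<rho>" "\<rho> \<le> 1"
  shows "2 * (k * Y - \<rho> * X) * Fsrc a \<theta> c d w X Y - 2 * k * (c + w) * Y * X\<^sup>2
      + 4 * k * (c + w) * (d + X) * Y * X + 2 * k * (d + X) * Y\<^sup>2 - 2 * \<rho> * Y * X\<^sup>2
      - 2 * \<rho> * (c + w) * (d + X) * X\<^sup>2 \<le> C0_c a \<theta> k * s * (w\<^sup>2 + X\<^sup>2 + Y\<^sup>2)"
proof -
  define Q where "Q = w\<^sup>2 + X\<^sup>2 + Y\<^sup>2"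
  define c0 where "c0 = 18 + 13 * \<theta> + (8 + 6 * \<theta>) / a\<^sup>2"
  define P where "P = (k + 1) * c0"
  have "c0 \<ge> 18" unfolding c0_def using theta_nonneg a_pos by simp
  hence "(k + 1) * 18 \<le> P" unfolding P_def using k by (intro mult_left_mono) auto
  hence "18 * k + 18 \<le> P" by simp
  moreover have "C0_c a \<theta> k = 12 * k + 4 * P + 10" unfolding C0_c_def c0_def P_def by simp
  ultimately have C0: "2 * ((k + 1) * c0) + (24 * k + 10) \<le> C0_c a \<theta> k"
    using k unfolding P_def[symmetric] by linarith
  have "2 * (k + 1) * c0 * s * Q + (24 * k + 10) * s * Q
      = (2 * ((k + 1) * c0) + (24 * k + 10)) * (s * Q)"
    by (simp add: algebra_simps)
  also have "\<dots> \<le> C0_c a \<theta> k * (s * Q)"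
    using C0 flow_bounds(4) unfolding Q_def by (intro mult_right_mono) auto
  finally show ?thesis using abs_weighted_Fsrc_le[OF assms] cubic_terms_le[OF assms]
    unfolding Q_def c0_def mult.assoc by linarith
qed

end

lemma weighted_cross_term_le:
  fixes \<rho> X Y :: real
  assumes "0 \<le> \<rho>" "\<rho> \<le> 1"
  shows "\<bar>2 * \<rho> * Y * X\<bar> \<le> X\<^sup>2 + Y\<^sup>2"
proof -
  have "\<bar>2 * \<rho> * Y * X\<bar> \<le> 2 * \<bar>Y\<bar> * \<bar>X\<bar>"
    using assms mult_left_le_one_le[of "2 * \<bar>Y\<bar> * \<bar>X\<bar>" \<rho>] by (simp add: abs_mult mult_ac)
  also have "\<dots> \<le> X\<^sup>2 + Y\<^sup>2" using sum_squares_bound[of "\<bar>Y\<bar>" "\<bar>X\<bar>"] by simp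
  finally show ?thesis .
qed

lemma sound_speed_bound:
  fixes a V :: real
  assumes "0 \<le> V" "V \<le> a / 2"
  shows "3/4 * a\<^sup>2 \<le> a\<^sup>2 - V\<^sup>2"
proof -
  have "V * V \<le> (a / 2) * (a / 2)" using assms by (intro mult_mono) auto
  thus ?thesis by (simp add: power2_eq_square)
qed

lemma energy_density_ge:
  fixes a k \<rho> V X Y M :: real
  assumes "0 \<le> \<rho>" "\<rho> \<le> 1" and V: "0 \<le> V" "V \<le> a / 2" and k: "k \<ge> 0"
    and M: "M \<le> 3/4 * k * a\<^sup>2 - a - 1" "M \<le> k - 1"
  shows "M * (X\<^sup>2 + Y\<^sup>2) \<le> k * ((a\<^sup>2 - V\<^sup>2) * X\<^sup>2 + Y\<^sup>2) - 2 * \<rho> * (V * X\<^sup>2 + Y * X)"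
proof -
  have "k * (3/4 * a\<^sup>2) * X\<^sup>2 \<le> k * (a\<^sup>2 - V\<^sup>2) * X\<^sup>2"
    using sound_speed_bound[OF V] k by (intro mult_right_mono mult_left_mono) auto
  moreover have "2 * \<rho> * V * X\<^sup>2 \<le> a * X\<^sup>2"
  proof -
    have "\<rho> * V \<le> 1 * (a / 2)" using assms by (intro mult_mono) auto
    thus ?thesis using mult_right_mono[of "2 * \<rho> * V" a "X\<^sup>2"] by simp
  qed
  moreover have "M * X\<^sup>2 \<le> (3/4 * k * a\<^sup>2 - a - 1) * X\<^sup>2" "M * Y\<^sup>2 \<le> (k - 1) * Y\<^sup>2"
    using M by (intro mult_right_mono; simp)+
  ultimately show ?thesis using weighted_cross_term_le[OF assms(1,2), of Y X] by (simp add: algebra_simps)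
qed

lemma energy_density_le:
  fixes a k \<rho> V X Y :: real
  assumes "0 \<le> \<rho>" "\<rho> \<le> 1" and V: "0 \<le> V" "V \<le> a / 2" and k: "k \<ge> 1"
    and ka: "a + 1 \<le> 3/4 * k * a\<^sup>2" and a: "a > 0"
  shows "k * ((a\<^sup>2 - V\<^sup>2) * X\<^sup>2 + Y\<^sup>2) - 2 * \<rho> * (V * X\<^sup>2 + Y * X) \<le> 2 * k * ((a\<^sup>2 - V\<^sup>2) * X\<^sup>2 + Y\<^sup>2)"
proof -
  have "k * (3/4 * a\<^sup>2) \<le> k * (a\<^sup>2 - V\<^sup>2)"
    using sound_speed_bound[OF V] k by (intro mult_left_mono) auto
  hence "1 * X\<^sup>2 \<le> k * (a\<^sup>2 - V\<^sup>2) * X\<^sup>2" using ka a by (intro mult_right_mono) auto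
  moreover have "1 * Y\<^sup>2 \<le> k * Y\<^sup>2" using k by (intro mult_right_mono) auto
  moreover have "0 \<le> 2 * \<rho> * V * X\<^sup>2" using assms by simp
  ultimately show ?thesis using weighted_cross_term_le[OF assms(1,2), of Y X] by (simp add: algebra_simps)
qed

lemma flux_quadratic_le:
  fixes k A V X Y a :: real
  assumes "0 \<le> A" "A \<le> a\<^sup>2" "0 \<le> V" "0 \<le> k"
  shows "2 * k * A * Y * X - 2 * k * V * Y\<^sup>2 - exp (- 1) * A * X\<^sup>2 - exp (- 1) * Y\<^sup>2
    \<le> exp 1 * k\<^sup>2 * a\<^sup>2 * Y\<^sup>2"
proof -
  have e: "exp (- 1) * exp 1 = (1::real)" by (simp add: exp_minus)
  have "0 \<le> A * exp (- 1) * (X - exp 1 * k * Y)\<^sup>2" using assms by simp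
  also have "\<dots> = exp (- 1) * A * X\<^sup>2 - 2 * k * A * Y * X * (exp (- 1) * exp 1)
     + A * k\<^sup>2 * Y\<^sup>2 * exp 1 * (exp (- 1) * exp 1)"
    by (simp add: power2_eq_square algebra_simps)
  finally have "0 \<le> exp (- 1) * A * X\<^sup>2 - 2 * k * A * Y * X + A * k\<^sup>2 * Y\<^sup>2 * exp 1" unfolding e by simp
  moreover have "A * k\<^sup>2 * Y\<^sup>2 * exp 1 \<le> a\<^sup>2 * k\<^sup>2 * Y\<^sup>2 * exp 1"
    using assms by (intro mult_right_mono) auto
  moreover have "0 \<le> 2 * k * V * Y\<^sup>2" "0 \<le> exp (- 1) * Y\<^sup>2" using assms by auto
  moreover have "exp 1 * k\<^sup>2 * a\<^sup>2 * Y\<^sup>2 = a\<^sup>2 * k\<^sup>2 * Y\<^sup>2 * exp 1" by simp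
  ultimately show ?thesis by linarith
qed

lemma flux_quadratic_nonneg:
  fixes k A V Y :: real
  assumes "2 * k * V + 1 \<le> k\<^sup>2 * A"
  shows "0 \<le> 2 * k * A * Y * (k * Y) - 2 * k * V * Y\<^sup>2 - 1 * A * (k * Y)\<^sup>2 - 1 * Y\<^sup>2"
proof -
  have "2 * k * A * Y * (k * Y) - 2 * k * V * Y\<^sup>2 - 1 * A * (k * Y)\<^sup>2 - 1 * Y\<^sup>2
      = Y\<^sup>2 * (k\<^sup>2 * A - 2 * k * V - 1)"
    by (simp add: power2_eq_square algebra_simps)
  thus ?thesis using assms by simp
qed

text \<open>
  Substituting the equation \<open>Z = F - 2 V M + A N\<close> for \<open>u\<^sub>t\<^sub>t\<close> (with \<open>M = u\<^sub>t\<^sub>x\<close>, \<open>N = u\<^sub>x\<^sub>x\<close>)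
  splits \<open>\<partial>\<^sub>t\<close> of the energy density into the \<open>x\<close>-derivative of the flux, the damping produced
  by the weight, and a remainder that is cubic in the small quantities.
\<close>

lemma energy_density_dt_eq:
  fixes k \<rho> L Fv V M A N c w d X Y Z a :: real
  assumes "L \<noteq> 0" "Z = Fv - 2 * V * M + A * N" "V = c + w" "A = a\<^sup>2 - V\<^sup>2"
  shows "k * (-2 * V * Y * X\<^sup>2 + 2 * A * X * M + 2 * Y * Z) - 2 * \<rho> * (Y * X\<^sup>2 + 2 * V * X * M + Z * X + Y * M)
   = (2 * k * ((-2 * V * (d + X)) * Y * X + A * M * X + A * Y * N) - 2 * k * ((d + X) * Y\<^sup>2 + 2 * V * Y * M)
      - ((-\<rho> / L) * A * X\<^sup>2 + \<rho> * (-2 * V * (d + X)) * X\<^sup>2 + 2 * \<rho> * A * X * N)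
      - ((-\<rho> / L) * Y\<^sup>2 + 2 * \<rho> * Y * M))
     + (-(\<rho> / L) * (A * X\<^sup>2 + Y\<^sup>2) + (2 * (k * Y - \<rho> * X) * Fv - 2 * k * V * Y * X\<^sup>2
        + 4 * k * V * (d + X) * Y * X + 2 * k * (d + X) * Y\<^sup>2 - 2 * \<rho> * Y * X\<^sup>2
        - 2 * \<rho> * V * (d + X) * X\<^sup>2))"
  using assms(1) by (simp only: assms(2,4,3)) (simp add: field_simps power2_eq_square)

section \<open>Calculus on intervals\<close>

lemma has_real_derivative_unique_Icc:
  fixes f :: "real \<Rightarrow> real"
  assumes "a < b" "x \<in> {a..b}"
    and "(f has_real_derivative f1) (at x within {a..b})" "(f has_real_derivative f2) (at x within {a..b})"
  shows "f1 = f2"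
  using assms
  by (metis box_real(2) vector_derivative_unique_within_closed_interval
      has_real_derivative_iff_has_vector_derivative)

lemma continuous_on_slice:
  assumes "continuous_on (S \<times> R) (\<lambda>p. f (fst p) (snd p))" "t \<in> S"
  shows "continuous_on R (f t)"
proof -
  have "continuous_on R (\<lambda>x. (\<lambda>p. f (fst p) (snd p)) (t, x))"
    by (rule continuous_on_compose2[OF assms(1)]) (use assms(2) in \<open>auto intro!: continuous_intros\<close>)
  thus ?thesis by simp
qed

lemma integral_real_derivative:
  fixes f f' :: "real \<Rightarrow> real"
  assumes "a \<le> b" "\<And>x. x \<in> {a..b} \<Longrightarrow> (f has_real_derivative f' x) (at x within {a..b})"
  shows "integral {a..b} f' = f b - f a"
  using fundamental_theorem_of_calculus[OF assms(1), of f f'] assms(2)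
  by (simp add: has_real_derivative_iff_has_vector_derivative integral_unique)

text \<open>
  Differentiate \<open>u(t,y) - u(t,0) = \<integral>\<^sub>0\<^sup>y u\<^sub>x(t,\<cdot>)\<close> under the integral sign in \<open>t\<close>, then in \<open>y\<close>.
\<close>

lemma mixed_partials_eq:
  fixes u ut ux uxt utx :: "real \<Rightarrow> real \<Rightarrow> real" and T L :: real
  assumes T: "T > 0" and L: "L > 0"
    and ux_cont: "continuous_on ({0..T} \<times> {0..L}) (\<lambda>p. ux (fst p) (snd p))"
    and uxt_cont: "continuous_on ({0..T} \<times> {0..L}) (\<lambda>p. uxt (fst p) (snd p))"
    and u_dt: "\<And>t x. t \<in> {0..T} \<Longrightarrow> x \<in> {0..L} \<Longrightarrow>
        ((\<lambda>s. u s x) has_real_derivative ut t x) (at t within {0..T})"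
    and u_dx: "\<And>t x. t \<in> {0..T} \<Longrightarrow> x \<in> {0..L} \<Longrightarrow>
        ((\<lambda>y. u t y) has_real_derivative ux t x) (at x within {0..L})"
    and ut_dx: "\<And>t x. t \<in> {0..T} \<Longrightarrow> x \<in> {0..L} \<Longrightarrow>
        ((\<lambda>y. ut t y) has_real_derivative utx t x) (at x within {0..L})"
    and ux_dt: "\<And>t x. t \<in> {0..T} \<Longrightarrow> x \<in> {0..L} \<Longrightarrow>
        ((\<lambda>s. ux s x) has_real_derivative uxt t x) (at t within {0..T})"
    and tx: "t \<in> {0..T}" "x \<in> {0..L}"
  shows "utx t x = uxt t x"
proof -
  have I: "integral {0..y} (ux s) = u s y - u s 0" if "s \<in> {0..T}" "y \<in> {0..L}" for s y
    by (rule integral_real_derivative) (use that in \<open>auto intro!: DERIV_subset[OF u_dx]\<close>)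
  have J: "ut t y - ut t 0 = integral {0..y} (uxt t)" if y: "y \<in> {0..L}" for y
  proof -
    have d1: "((\<lambda>s. u s y - u s 0) has_real_derivative ut t y - ut t 0) (at t within {0..T})"
      using u_dt[OF tx(1) y] u_dt[OF tx(1), of 0] L by (auto intro!: derivative_eq_intros)
    have d2: "((\<lambda>s. integral (cbox 0 y) (ux s)) has_real_derivative integral (cbox 0 y) (uxt t))
        (at t within {0..T})"
    proof (rule leibniz_rule_field_derivative)
      show "\<And>s z. s \<in> {0..T} \<Longrightarrow> z \<in> cbox 0 y \<Longrightarrow>
          ((\<lambda>s. ux s z) has_field_derivative uxt s z) (at s within {0..T})"
        using ux_dt y by auto
      show "ux s integrable_on cbox 0 y" if "s \<in> {0..T}" for s
        using y that by (auto intro!: integrable_continuous_interval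
            continuous_on_subset[OF continuous_on_slice[OF ux_cont]])
      show "continuous_on ({0..T} \<times> cbox 0 y) (\<lambda>(s, z). uxt s z)"
        using y by (auto simp: case_prod_beta' intro!: continuous_on_subset[OF uxt_cont])
    qed (use tx in auto)
    have d3: "((\<lambda>s. integral {0..y} (ux s)) has_real_derivative ut t y - ut t 0) (at t within {0..T})"
      by (rule has_field_derivative_transform_within[OF d1 zero_less_one]) (use tx I y in auto)
    show ?thesis using has_real_derivative_unique_Icc[OF T tx(1) d3] d2 by simp
  qed
  have e1: "((\<lambda>y. ut t y - ut t 0) has_real_derivative utx t x) (at x within {0..L})"
    using ut_dx[OF tx] by (auto intro!: derivative_eq_intros)
  have e2: "((\<lambda>y. integral {0..y} (uxt t)) has_real_derivative uxt t x) (at x within {0..L})"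
    by (rule integral_has_real_derivative[OF continuous_on_slice[OF uxt_cont tx(1)] tx(2)])
  have e3: "((\<lambda>y. integral {0..y} (uxt t)) has_real_derivative utx t x) (at x within {0..L})"
    by (rule has_field_derivative_transform_within[OF e1 zero_less_one]) (use tx J in auto)
  show ?thesis using has_real_derivative_unique_Icc[OF L tx(2) e3 e2] .
qed

lemma integral_power2_le:
  fixes g :: "real \<Rightarrow> real"
  assumes pq: "p \<le> q" and g: "continuous_on {p..q} g"
  shows "(integral {p..q} g)\<^sup>2 \<le> (q - p) * integral {p..q} (\<lambda>x. (g x)\<^sup>2)"
proof -
  define l where "l = q - p"
  define I1 where "I1 = integral {p..q} g"
  define I2 where "I2 = integral {p..q} (\<lambda>x. (g x)\<^sup>2)"
  have h1: "(g has_integral I1) {p..q}" unfolding I1_def using g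
    by (intro integrable_integral integrable_continuous_interval)
  have h2: "((\<lambda>x. (g x)\<^sup>2) has_integral I2) {p..q}" unfolding I2_def using g
    by (intro integrable_integral integrable_continuous_interval continuous_intros)
  have c: "((\<lambda>x. I1\<^sup>2) has_integral l * I1\<^sup>2) {p..q}"
    using has_integral_const_real[of "I1\<^sup>2" p q] pq unfolding l_def by simp
  have "((\<lambda>x. (g x)\<^sup>2 * l\<^sup>2 - g x * (2 * l * I1) + I1\<^sup>2) has_integral
      (I2 * l\<^sup>2 - I1 * (2 * l * I1) + l * I1\<^sup>2)) {p..q}"
    by (intro has_integral_add has_integral_diff has_integral_mult_left h1 h2 c)
  hence "0 \<le> I2 * l\<^sup>2 - I1 * (2 * l * I1) + l * I1\<^sup>2"
  proof (rule has_integral_nonneg)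
    fix x
    have "0 \<le> (l * g x - I1)\<^sup>2" by simp
    thus "0 \<le> (g x)\<^sup>2 * l\<^sup>2 - g x * (2 * l * I1) + I1\<^sup>2" by (simp add: power2_eq_square algebra_simps)
  qed
  hence "0 \<le> l * (l * I2 - I1\<^sup>2)" by (simp add: power2_eq_square algebra_simps)
  moreover have "0 \<le> l" unfolding l_def using pq by simp
  ultimately have "l = 0 \<or> I1\<^sup>2 \<le> l * I2" by (auto simp: zero_le_mult_iff)
  thus ?thesis unfolding l_def I1_def I2_def by auto
qed

lemma integral_power2_le_endpoint:
  fixes f f' :: "real \<Rightarrow> real" and L :: real
  assumes L: "L > 0" and c: "continuous_on {0..L} f'"
    and d: "\<And>x. x \<in> {0..L} \<Longrightarrow> (f has_real_derivative f' x) (at x within {0..L})"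
  shows "integral {0..L} (\<lambda>x. (f x)\<^sup>2) \<le> 2 * L * (f L)\<^sup>2 + 2 * L\<^sup>2 * integral {0..L} (\<lambda>x. (f' x)\<^sup>2)"
proof -
  define I2 where "I2 = integral {0..L} (\<lambda>x. (f' x)\<^sup>2)"
  have ic: "(\<lambda>y. (f' y)\<^sup>2) integrable_on {0..L}"
    by (intro integrable_continuous_interval continuous_intros c)
  have pointwise: "(f x)\<^sup>2 \<le> 2 * (f L)\<^sup>2 + 2 * L * I2" if x: "x \<in> {0..L}" for x
  proof -
    have "integral {x..L} f' = f L - f x"
      by (rule integral_real_derivative) (use x in \<open>auto intro!: DERIV_subset[OF d]\<close>)
    hence "(f L - f x)\<^sup>2 = (integral {x..L} f')\<^sup>2" by simp
    also have "\<dots> \<le> (L - x) * integral {x..L} (\<lambda>y. (f' y)\<^sup>2)"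
      using x by (intro integral_power2_le continuous_on_subset[OF c]) auto
    also have "\<dots> \<le> L * I2" unfolding I2_def
      using x by (intro mult_mono integral_subset_le integrable_on_subinterval[OF ic]
          integral_nonneg) auto
    finally have "(f L - f x)\<^sup>2 \<le> L * I2" .
    moreover have "(f x)\<^sup>2 \<le> 2 * (f L)\<^sup>2 + 2 * (f L - f x)\<^sup>2"
      using zero_le_power2[of "2 * f L - f x"] by (simp add: power2_eq_square algebra_simps)
    ultimately show ?thesis by linarith
  qed
  have "integral {0..L} (\<lambda>x. (f x)\<^sup>2) \<le> integral {0..L} (\<lambda>x. 2 * (f L)\<^sup>2 + 2 * L * I2)"
    by (intro integral_le integrable_continuous_interval continuous_intros pointwise
        DERIV_continuous_on[OF d]) auto
  also have "\<dots> = L * (2 * (f L)\<^sup>2 + 2 * L * I2)" using L by simp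
  finally show ?thesis unfolding I2_def by (simp add: power2_eq_square algebra_simps)
qed

lemma diff_le_integral_of_derivative_le:
  fixes E E' g :: "real \<Rightarrow> real" and p q :: real
  assumes pq: "p \<le> q" and sub: "{p..q} \<subseteq> S"
    and dE: "\<And>\<tau>. \<tau> \<in> S \<Longrightarrow> (E has_real_derivative E' \<tau>) (at \<tau> within S)"
    and gc: "continuous_on {p..q} g"
    and le: "\<And>\<tau>. \<tau> \<in> {p..q} \<Longrightarrow> E' \<tau> \<le> g \<tau>"
  shows "E q - E p \<le> integral {p..q} g"
proof -
  have "E q - integral {p..q} g \<le> E p - integral {p..p} g"
  proof (rule DERIV_nonpos_imp_decreasing_open[OF pq])
    fix x assume x: "p < x" "x < q"
    have "x \<in> S" using x sub by auto
    hence "(E has_real_derivative E' x) (at x within {p..q})" using dE sub by (blast intro: DERIV_subset)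
    hence "(E has_real_derivative E' x) (at x)" using x at_within_Icc_at[of p x q] by simp
    moreover have "((\<lambda>\<tau>. integral {p..\<tau>} g) has_real_derivative g x) (at x)"
      using integral_has_real_derivative[OF gc, of x] x at_within_Icc_at[of p x q] by auto
    ultimately have "((\<lambda>\<tau>. E \<tau> - integral {p..\<tau>} g) has_real_derivative E' x - g x) (at x)"
      by (rule DERIV_diff)
    thus "\<exists>y. ((\<lambda>\<tau>. E \<tau> - integral {p..\<tau>} g) has_real_derivative y) (at x) \<and> y \<le> 0"
      using le[of x] x by auto
  next
    have "continuous_on {p..q} E"
      using DERIV_continuous_on[OF dE] sub by (rule continuous_on_subset)
    thus "continuous_on {p..q} (\<lambda>\<tau>. E \<tau> - integral {p..\<tau>} g)"
      by (intro continuous_intros indefinite_integral_continuous_1 integrable_continuous_interval gc)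
  qed
  thus ?thesis by simp
qed

lemma nondecreasing_of_nonneg_derivative:
  fixes f f' :: "real \<Rightarrow> real"
  assumes df: "\<And>y. y \<in> {a..b} \<Longrightarrow> (f has_real_derivative f' y) (at y within {a..b})"
    and f'_nonneg: "\<And>y. y \<in> {a..b} \<Longrightarrow> 0 \<le> f' y" and x: "x \<in> {a..b}"
  shows "f a \<le> f x"
proof (rule DERIV_nonneg_imp_increasing_open[of a x f])
  fix y assume y: "a < y" "y < x"
  hence "(f has_real_derivative f' y) (at y)"
    using df[of y] x at_within_Icc_at[of a y b] by auto
  thus "\<exists>z. (f has_real_derivative z) (at y) \<and> 0 \<le> z" using f'_nonneg[of y] y x by auto
next
  have "continuous_on {a..b} f" using df by (rule DERIV_continuous_on)
  thus "continuous_on {a..x} f" by (rule continuous_on_subset) (use x in auto)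
qed (use x in auto)

lemma exp_forced_decay:
  fixes f f' :: "real \<Rightarrow> real" and \<mu> \<nu> K t0 t1 :: real
  assumes t: "t0 \<le> t1" and \<nu>: "\<mu> < \<nu>" and K: "0 \<le> K"
    and fc: "continuous_on {t0..t1} f"
    and df: "\<And>x. x \<in> {t0<..<t1} \<Longrightarrow> (f has_real_derivative f' x) (at x)"
    and le: "\<And>x. x \<in> {t0<..<t1} \<Longrightarrow> f' x \<le> - \<mu> * f x + K * exp (- \<nu> * x)"
  shows "f t1 \<le> exp (- \<mu> * (t1 - t0)) * (f t0 + K / (\<nu> - \<mu>) * exp (- \<nu> * t0))"
proof -
  define D where "D = \<nu> - \<mu>"
  have D: "D > 0" unfolding D_def using \<nu> by simp
  define \<psi> where "\<psi> s = exp (\<mu> * s) * f s + K / D * exp (- D * s)" for s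
  have "\<psi> t1 \<le> \<psi> t0"
  proof (rule DERIV_nonpos_imp_decreasing_open[OF t])
    fix x assume x: "t0 < x" "x < t1"
    have "(\<psi> has_real_derivative
        exp (\<mu> * x) * \<mu> * f x + f' x * exp (\<mu> * x) + K / D * (exp (- D * x) * (- D))) (at x)"
      unfolding \<psi>_def using df[of x] x by (auto intro!: derivative_eq_intros)
    moreover have "exp (\<mu> * x) * f' x \<le> exp (\<mu> * x) * (- \<mu> * f x + K * exp (- \<nu> * x))"
      using le[of x] x by (intro mult_left_mono) auto
    moreover have "exp (\<mu> * x) * exp (- \<nu> * x) = exp (- D * x)"
      unfolding D_def by (simp flip: exp_add add: algebra_simps)
    ultimately show "\<exists>y. (\<psi> has_real_derivative y) (at x) \<and> y \<le> 0"
      using D by (intro exI[of _ "exp (\<mu> * x) * \<mu> * f x + f' x * exp (\<mu> * x)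
          + K / D * (exp (- D * x) * (- D))"]) (auto simp: algebra_simps)
  next
    show "continuous_on {t0..t1} \<psi>" unfolding \<psi>_def by (intro continuous_intros fc)
  qed
  moreover have "0 \<le> K / D * exp (- D * t1)" using K D by simp
  ultimately have "exp (\<mu> * t1) * f t1 \<le> exp (\<mu> * t0) * f t0 + K / D * exp (- D * t0)"
    unfolding \<psi>_def by linarith
  have "f t1 = exp (- \<mu> * t1) * (exp (\<mu> * t1) * f t1)" by (simp add: exp_minus field_simps)
  also have "\<dots> \<le> exp (- \<mu> * t1) * (exp (\<mu> * t0) * f t0 + K / D * exp (- D * t0))"
    using \<open>exp (\<mu> * t1) * f t1 \<le> _\<close> by (intro mult_left_mono) auto
  also have "\<dots> = exp (- \<mu> * (t1 - t0)) * (f t0 + K / (\<nu> - \<mu>) * exp (- \<nu> * t0))"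
    unfolding D_def by (simp flip: exp_add add: algebra_simps)
  finally show ?thesis .
qed

lemma window_integral_has_derivative:
  fixes E :: "real \<Rightarrow> real" and T l :: real
  assumes Ec: "continuous_on {0..T} E" and l: "0 < l"
  shows "continuous_on {l..T} (\<lambda>s. integral {s - l..s} E)"
    and "\<And>s. s \<in> {l<..<T} \<Longrightarrow> ((\<lambda>s. integral {s - l..s} E) has_real_derivative E s - E (s - l)) (at s)"
proof -
  define G where "G s = integral {0..s} E" for s
  have window: "integral {s - l..s} E = G s - G (s - l)" if s: "s \<in> {l..T}" for s
  proof -
    have "E integrable_on {0..s}"
      using s l by (intro integrable_continuous_interval continuous_on_subset[OF Ec]) auto
    hence "integral {0..s - l} E + integral {s - l..s} E = integral {0..s} E"
      using Henstock_Kurzweil_Integration.integral_combine[of 0 "s - l" s E] s l by simp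
    thus ?thesis unfolding G_def by simp
  qed
  have dG: "(G has_real_derivative E x) (at x)" if "0 < x" "x < T" for x
    using integral_has_real_derivative[OF Ec, of x] that at_within_Icc_at[of 0 x T]
    unfolding G_def by auto
  have Gc: "continuous_on {0..T} G" unfolding G_def
    by (intro indefinite_integral_continuous_1 integrable_continuous_interval Ec)
  have "continuous_on {l..T} (\<lambda>s. G s - G (s - l))"
    by (intro continuous_intros continuous_on_subset[OF Gc]
        continuous_on_compose2[OF Gc, of _ "\<lambda>s. s - l"]) (use l in auto)
  thus "continuous_on {l..T} (\<lambda>s. integral {s - l..s} E)"
    by (rule continuous_on_eq) (use window in auto)
  show "((\<lambda>s. integral {s - l..s} E) has_real_derivative E s - E (s - l)) (at s)"
    if s: "s \<in> {l<..<T}" for s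
  proof -
  have "((\<lambda>s. G (s - l)) has_real_derivative E (s - l) * 1) (at s)"
    by (rule DERIV_chain2[OF dG]) (use s l in \<open>auto intro!: derivative_eq_intros\<close>)
  hence "((\<lambda>s. G s - G (s - l)) has_real_derivative E s - E (s - l)) (at s)"
    using dG[of s] s l by (auto intro!: derivative_eq_intros)
  thus "((\<lambda>s. integral {s - l..s} E) has_real_derivative E s - E (s - l)) (at s)"
  proof (rule has_field_derivative_transform_within_open[where S = "{l<..<T}"])
    show "G y - G (y - l) = integral {y - l..y} E" if "y \<in> {l<..<T}" for y
      using window that by auto
  qed (use s in auto)
  qed
qed

lemma window_energy_decay:
  fixes E E' h :: "real \<Rightarrow> real" and T l \<mu> \<nu> C Ch t :: real
  assumes l: "0 < l" "l < T" and \<mu>: "0 < \<mu>" "\<mu> < \<nu>" and C: "0 \<le> C" and Ch: "0 < Ch"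
    and dE: "\<And>\<tau>. \<tau> \<in> {0..T} \<Longrightarrow> (E has_real_derivative E' \<tau>) (at \<tau> within {0..T})"
    and hc: "continuous_on {0..T} h"
    and E'_le: "\<And>\<tau>. \<tau> \<in> {0..T} \<Longrightarrow> E' \<tau> \<le> - \<mu> * E \<tau> + C * h \<tau>"
    and h_decay: "\<And>t. t \<in> {l<..<T} \<Longrightarrow> integral {t - l..t} h \<le> Ch * exp (- \<nu> * t)"
    and t: "t \<in> {l..T}"
  shows "integral {t - l..t} E \<le> exp (- \<mu> * (t - l)) * (integral {l - l..l} E + C * Ch / (\<nu> - \<mu>))"
proof -
  have Ec: "continuous_on {0..T} E" by (rule DERIV_continuous_on[OF dE])
  have integrable: "f integrable_on {s - l..s}"
    if "continuous_on {0..T} f" "s \<in> {l..T}" for f :: "real \<Rightarrow> real" and s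
    by (rule integrable_continuous_interval, rule continuous_on_subset[OF that(1)]) (use that l in auto)
  have "integral {t - l..t} E
      \<le> exp (- \<mu> * (t - l)) * (integral {l - l..l} E + C * Ch / (\<nu> - \<mu>) * exp (- \<nu> * l))"
  proof (rule exp_forced_decay[where f = "\<lambda>s. integral {s - l..s} E"])
    show "continuous_on {l..t} (\<lambda>s. integral {s - l..s} E)"
      by (rule continuous_on_subset[OF window_integral_has_derivative(1)[OF Ec l(1)]]) (use t in auto)
    fix s assume s: "s \<in> {l<..<t}"
    hence sT: "s \<in> {l<..<T}" using t by auto
    show "((\<lambda>s. integral {s - l..s} E) has_real_derivative E s - E (s - l)) (at s)"
      by (rule window_integral_has_derivative(2)[OF Ec l(1) sT])
    have "E s - E (s - l) \<le> integral {s - l..s} (\<lambda>\<tau>. - \<mu> * E \<tau> + C * h \<tau>)"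
      by (rule diff_le_integral_of_derivative_le[OF _ _ dE])
         (use sT l E'_le in \<open>auto intro!: continuous_intros continuous_on_subset[OF Ec]
           continuous_on_subset[OF hc]\<close>)
    also have "\<dots> = - \<mu> * integral {s - l..s} E + C * integral {s - l..s} h"
      using integral_add[OF integrable_on_mult_right[OF integrable[OF Ec], of _ "- \<mu>"]
          integrable_on_mult_right[OF integrable[OF hc], of _ C]] sT by simp
    also have "\<dots> \<le> - \<mu> * integral {s - l..s} E + C * Ch * exp (- \<nu> * s)"
      using h_decay[OF sT] C by (simp add: mult_left_mono mult.assoc)
    finally show "E s - E (s - l) \<le> - \<mu> * integral {s - l..s} E + C * Ch * exp (- \<nu> * s)" .
  qed (use t \<mu> C Ch in auto)
  also have "\<dots> \<le> exp (- \<mu> * (t - l)) * (integral {l - l..l} E + C * Ch / (\<nu> - \<mu>))"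
  proof -
    have "exp (- \<nu> * l) \<le> 1" using l \<mu> by simp
    hence "C * Ch / (\<nu> - \<mu>) * exp (- \<nu> * l) \<le> C * Ch / (\<nu> - \<mu>)"
      using C Ch \<mu> by (intro mult_left_le) auto
    thus ?thesis by (intro mult_left_mono) auto
  qed
  finally show ?thesis .
qed

section \<open>The energy method\<close>

text \<open>
  The hypotheses of the theorem in the form used below; \<open>g\<close> and \<open>g'\<close> stand for the boundary
  datum \<open>b (\<cdot>, \<omega>)\<close> and its time derivative.
\<close>

locale gas_flow_solution =
  fixes a \<theta> L k T :: real
    and ub ubx :: "real \<Rightarrow> real"
    and u ut ux utt utx uxt uxx :: "real \<Rightarrow> real \<Rightarrow> real"
    and g g' :: "real \<Rightarrow> real"
  assumes a_pos: "0 < a" and theta_nonneg: "0 \<le> \<theta>" and L_pos: "0 < L" and T_pos: "0 < T"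
    and k_ge_1: "1 \<le> k" and k_large: "a + 1 \<le> 3/4 * k * a\<^sup>2"
    and ub_cont: "continuous_on {0..L} ub" and ubx_cont: "continuous_on {0..L} ubx"
    and ub_deriv: "\<And>x. x \<in> {0..L} \<Longrightarrow> (ub has_real_derivative ubx x) (at x within {0..L})"
    and ub_pos: "\<And>x. x \<in> {0..L} \<Longrightarrow> 0 < ub x"
    and ub_small: "\<And>x. x \<in> {0..L} \<Longrightarrow> ub x \<le> min 1 (mu_c L k / (C0_c a \<theta> k * K1_c a L k))"
    and ub_subsonic: "\<And>x. x \<in> {0..L} \<Longrightarrow> ub x \<le> a / 4"
    and ubx_nonneg: "\<And>x. x \<in> {0..L} \<Longrightarrow> 0 \<le> ubx x"
    and ubx_small: "\<And>x. x \<in> {0..L} \<Longrightarrow> ubx x \<le> min 1 (mu_c L k / (C0_c a \<theta> k * K1_c a L k))"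
    and u_le_ub: "\<And>t x. t \<in> {0..T} \<Longrightarrow> x \<in> {0..L} \<Longrightarrow> \<bar>u t x\<bar> \<le> ub x"
    and flow_subsonic: "\<And>t x. t \<in> {0..T} \<Longrightarrow> x \<in> {0..L} \<Longrightarrow> ub x + u t x \<le> a / 2"
    and u_small: "\<And>t x. t \<in> {0..T} \<Longrightarrow> x \<in> {0..L} \<Longrightarrow>
        Max {\<bar>u t x\<bar>, \<bar>ux t x\<bar>, \<bar>ut t x\<bar>} \<le> min 1 (mu_c L k / (C0_c a \<theta> k * K1_c a L k))"
    and u_cont: "continuous_on ({0..T} \<times> {0..L}) (\<lambda>(t, x). u t x)"
    and ut_cont: "continuous_on ({0..T} \<times> {0..L}) (\<lambda>(t, x). ut t x)"
    and ux_cont: "continuous_on ({0..T} \<times> {0..L}) (\<lambda>(t, x). ux t x)"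
    and utt_cont: "continuous_on ({0..T} \<times> {0..L}) (\<lambda>(t, x). utt t x)"
    and utx_cont: "continuous_on ({0..T} \<times> {0..L}) (\<lambda>(t, x). utx t x)"
    and uxt_cont: "continuous_on ({0..T} \<times> {0..L}) (\<lambda>(t, x). uxt t x)"
    and uxx_cont: "continuous_on ({0..T} \<times> {0..L}) (\<lambda>(t, x). uxx t x)"
    and u_dt: "\<And>t x. t \<in> {0..T} \<Longrightarrow> x \<in> {0..L} \<Longrightarrow>
        ((\<lambda>s. u s x) has_real_derivative ut t x) (at t within {0..T})"
    and u_dx: "\<And>t x. t \<in> {0..T} \<Longrightarrow> x \<in> {0..L} \<Longrightarrow>
        ((\<lambda>y. u t y) has_real_derivative ux t x) (at x within {0..L})"
    and ut_dt: "\<And>t x. t \<in> {0..T} \<Longrightarrow> x \<in> {0..L} \<Longrightarrow>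
        ((\<lambda>s. ut s x) has_real_derivative utt t x) (at t within {0..T})"
    and ut_dx: "\<And>t x. t \<in> {0..T} \<Longrightarrow> x \<in> {0..L} \<Longrightarrow>
        ((\<lambda>y. ut t y) has_real_derivative utx t x) (at x within {0..L})"
    and ux_dt: "\<And>t x. t \<in> {0..T} \<Longrightarrow> x \<in> {0..L} \<Longrightarrow>
        ((\<lambda>s. ux s x) has_real_derivative uxt t x) (at t within {0..T})"
    and ux_dx: "\<And>t x. t \<in> {0..T} \<Longrightarrow> x \<in> {0..L} \<Longrightarrow>
        ((\<lambda>y. ux t y) has_real_derivative uxx t x) (at x within {0..L})"
    and pde: "\<And>t x. t \<in> {0..T} \<Longrightarrow> x \<in> {0..L} \<Longrightarrow>
        utt t x + 2 * (ub x + u t x) * utx t x - (a\<^sup>2 - (ub x + u t x)\<^sup>2) * uxx t x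
          = Fsrc a \<theta> (ub x) (ubx x) (u t x) (ux t x) (ut t x)"
    and feedback: "\<And>t. t \<in> {0..T} \<Longrightarrow> ux t 0 = k * ut t 0"
    and outflow: "\<And>t. t \<in> {0..T} \<Longrightarrow> u t L = g t"
    and g_deriv: "\<And>t. t \<in> {0..T} \<Longrightarrow> (g has_real_derivative g' t) (at t within {0..T})"
    and g_cont: "continuous_on {0..T} g" and g'_cont: "continuous_on {0..T} g'"
begin

abbreviation \<mu> where "\<mu> \<equiv> mu_c L k"
abbreviation K1 where "K1 \<equiv> K1_c a L k"
abbreviation \<epsilon> where "\<epsilon> \<equiv> mu_c L k / (C0_c a \<theta> k * K1_c a L k)"

lemma constants_pos: "0 < \<epsilon>" "0 < \<mu>" "0 < C0_c a \<theta> k" "0 < K1" "0 < M1_c a k"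
proof -
  have L0: "0 \<in> {0..L}" using L_pos by simp
  show eps: "0 < \<epsilon>" using ub_pos[OF L0] ub_small[OF L0] by linarith
  show mu: "0 < \<mu>" unfolding mu_c_def using L_pos k_ge_1 by simp
  show C0: "0 < C0_c a \<theta> k" unfolding C0_c_def using k_ge_1 theta_nonneg by (simp add: add_pos_nonneg)
  show K1: "0 < K1" using eps mu C0 by (simp add: zero_less_divide_iff zero_less_mult_iff)
  have "0 < 1 + 2 * L\<^sup>2" by (simp add: add_pos_nonneg)
  thus "0 < M1_c a k" using K1 unfolding K1_c_def by (simp add: zero_less_divide_iff)
qed

lemma weight_bounds:
  assumes "x \<in> {0..L}"
  shows "0 < exp (- x / L)" "exp (- x / L) \<le> 1" "exp (- 1) \<le> exp (- x / L)"
  using assms L_pos by (auto simp: field_simps)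

lemma flow_nonneg: "t \<in> {0..T} \<Longrightarrow> x \<in> {0..L} \<Longrightarrow> 0 \<le> ub x + u t x"
  using u_le_ub by fastforce

lemma sound_speed_pos: "t \<in> {0..T} \<Longrightarrow> x \<in> {0..L} \<Longrightarrow> 3/4 * a\<^sup>2 \<le> a\<^sup>2 - (ub x + u t x)\<^sup>2"
  using sound_speed_bound flow_nonneg flow_subsonic by blast

lemma small_state_at:
  assumes "t \<in> {0..T}" "x \<in> {0..L}"
  shows "small_state \<theta> a (ub x) (ubx x) (u t x) (ux t x) (ut t x) \<epsilon>"
  using assms theta_nonneg a_pos ub_pos ub_small ub_subsonic ubx_nonneg ubx_small u_le_ub u_small[OF assms]
  unfolding small_state_def by auto

definition energy_density :: "real \<Rightarrow> real \<Rightarrow> real" where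
  "energy_density t x = k * ((a\<^sup>2 - (ub x + u t x)\<^sup>2) * (ux t x)\<^sup>2 + (ut t x)\<^sup>2)
     - 2 * exp (- x / L) * ((ub x + u t x) * (ux t x)\<^sup>2 + ut t x * ux t x)"

definition energy_density_dt :: "real \<Rightarrow> real \<Rightarrow> real" where
  "energy_density_dt t x = k * (-2 * (ub x + u t x) * ut t x * (ux t x)\<^sup>2
        + 2 * (a\<^sup>2 - (ub x + u t x)\<^sup>2) * ux t x * uxt t x + 2 * ut t x * utt t x)
     - 2 * exp (- x / L) * (ut t x * (ux t x)\<^sup>2 + 2 * (ub x + u t x) * ux t x * uxt t x
        + utt t x * ux t x + ut t x * uxt t x)"

definition flux :: "real \<Rightarrow> real \<Rightarrow> real" where
  "flux t x = 2 * k * (a\<^sup>2 - (ub x + u t x)\<^sup>2) * ut t x * ux t x - 2 * k * (ub x + u t x) * (ut t x)\<^sup>2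
      - exp (- x / L) * (a\<^sup>2 - (ub x + u t x)\<^sup>2) * (ux t x)\<^sup>2 - exp (- x / L) * (ut t x)\<^sup>2"

definition flux_dx :: "real \<Rightarrow> real \<Rightarrow> real" where
  "flux_dx t x = 2 * k * ((-2 * (ub x + u t x) * (ubx x + ux t x)) * ut t x * ux t x
        + (a\<^sup>2 - (ub x + u t x)\<^sup>2) * utx t x * ux t x + (a\<^sup>2 - (ub x + u t x)\<^sup>2) * ut t x * uxx t x)
      - 2 * k * ((ubx x + ux t x) * (ut t x)\<^sup>2 + 2 * (ub x + u t x) * ut t x * utx t x)
      - ((- exp (- x / L) / L) * (a\<^sup>2 - (ub x + u t x)\<^sup>2) * (ux t x)\<^sup>2
         + exp (- x / L) * (-2 * (ub x + u t x) * (ubx x + ux t x)) * (ux t x)\<^sup>2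
         + 2 * exp (- x / L) * (a\<^sup>2 - (ub x + u t x)\<^sup>2) * ux t x * uxx t x)
      - ((- exp (- x / L) / L) * (ut t x)\<^sup>2 + 2 * exp (- x / L) * ut t x * utx t x)"

definition remainder :: "real \<Rightarrow> real \<Rightarrow> real" where
  "remainder t x = 2 * (k * ut t x - exp (- x / L) * ux t x) * Fsrc a \<theta> (ub x) (ubx x) (u t x) (ux t x) (ut t x)
      - 2 * k * (ub x + u t x) * ut t x * (ux t x)\<^sup>2
      + 4 * k * (ub x + u t x) * (ubx x + ux t x) * ut t x * ux t x + 2 * k * (ubx x + ux t x) * (ut t x)\<^sup>2
      - 2 * exp (- x / L) * ut t x * (ux t x)\<^sup>2
      - 2 * exp (- x / L) * (ub x + u t x) * (ubx x + ux t x) * (ux t x)\<^sup>2"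

definition h1_density :: "real \<Rightarrow> real \<Rightarrow> real" where
  "h1_density t x = (u t x)\<^sup>2 + (ux t x)\<^sup>2 + (ut t x)\<^sup>2"

lemma E1_eq_integral: "E1 a L k ub u ux ut t = integral {0..L} (energy_density t)"
  unfolding E1_def energy_density_def ..

lemma energy_density_bounds:
  assumes "t \<in> {0..T}" "x \<in> {0..L}"
  shows "M1_c a k * ((ux t x)\<^sup>2 + (ut t x)\<^sup>2) \<le> energy_density t x"
    and "energy_density t x \<le> 2 * k * ((a\<^sup>2 - (ub x + u t x)\<^sup>2) * (ux t x)\<^sup>2 + (ut t x)\<^sup>2)"
  unfolding energy_density_def
  using energy_density_ge[of "exp (- x / L)" "ub x + u t x" a k "M1_c a k"]
    energy_density_le[of "exp (- x / L)" "ub x + u t x" a k] weight_bounds[OF assms(2)]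
    flow_nonneg[OF assms] flow_subsonic[OF assms] k_ge_1 k_large a_pos
  by (auto simp: M1_c_def)

lemma continuous_on_fields:
  "continuous_on ({0..T} \<times> {0..L}) (\<lambda>p. u (fst p) (snd p))"
  "continuous_on ({0..T} \<times> {0..L}) (\<lambda>p. ut (fst p) (snd p))"
  "continuous_on ({0..T} \<times> {0..L}) (\<lambda>p. ux (fst p) (snd p))"
  "continuous_on ({0..T} \<times> {0..L}) (\<lambda>p. utt (fst p) (snd p))"
  "continuous_on ({0..T} \<times> {0..L}) (\<lambda>p. utx (fst p) (snd p))"
  "continuous_on ({0..T} \<times> {0..L}) (\<lambda>p. uxt (fst p) (snd p))"
  "continuous_on ({0..T} \<times> {0..L}) (\<lambda>p. uxx (fst p) (snd p))"
  "continuous_on ({0..T} \<times> {0..L}) (\<lambda>p. ub (snd p))"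
  "continuous_on ({0..T} \<times> {0..L}) (\<lambda>p. ubx (snd p))"
  using u_cont ut_cont ux_cont utt_cont utx_cont uxt_cont uxx_cont
  by (auto simp: case_prod_beta' intro: continuous_on_compose2[OF ub_cont continuous_on_snd]
      continuous_on_compose2[OF ubx_cont continuous_on_snd])

lemma continuous_on_densities:
  "continuous_on ({0..T} \<times> {0..L}) (\<lambda>p. energy_density (fst p) (snd p))"
  "continuous_on ({0..T} \<times> {0..L}) (\<lambda>p. energy_density_dt (fst p) (snd p))"
  "continuous_on ({0..T} \<times> {0..L}) (\<lambda>p. flux_dx (fst p) (snd p))"
  "continuous_on ({0..T} \<times> {0..L}) (\<lambda>p. h1_density (fst p) (snd p))"
  unfolding energy_density_def energy_density_dt_def flux_dx_def h1_density_def
  using L_pos by (intro continuous_intros continuous_on_fields; simp)+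

lemma integrable_on_slice:
  fixes f :: "real \<Rightarrow> real \<Rightarrow> real"
  assumes "continuous_on ({0..T} \<times> {0..L}) (\<lambda>p. f (fst p) (snd p))" "t \<in> {0..T}"
  shows "f t integrable_on {0..L}"
  by (rule integrable_continuous_interval[OF continuous_on_slice[OF assms]])

lemma mixed_partials: "t \<in> {0..T} \<Longrightarrow> x \<in> {0..L} \<Longrightarrow> uxt t x = utx t x"
  using mixed_partials_eq[OF T_pos L_pos continuous_on_fields(3,6) u_dt u_dx ut_dx ux_dt] by simp

lemma ut_outflow: "t \<in> {0..T} \<Longrightarrow> ut t L = g' t"
proof -
  assume t: "t \<in> {0..T}"
  have "((\<lambda>s. u s L) has_real_derivative g' t) (at t within {0..T})"
    by (rule has_field_derivative_transform_within[OF g_deriv[OF t] zero_less_one]) (use t outflow in auto)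
  with u_dt[OF t, of L] L_pos show ?thesis using has_real_derivative_unique_Icc[OF T_pos t] by auto
qed

lemma has_derivative_energy_density:
  assumes "t \<in> {0..T}" "x \<in> {0..L}"
  shows "((\<lambda>\<tau>. energy_density \<tau> x) has_real_derivative energy_density_dt t x) (at t within {0..T})"
  unfolding energy_density_def using assms
  by (auto intro!: derivative_eq_intros u_dt ux_dt ut_dt
      simp: energy_density_dt_def algebra_simps power2_eq_square)

lemma has_derivative_flux:
  assumes "t \<in> {0..T}" "x \<in> {0..L}"
  shows "((\<lambda>y. flux t y) has_real_derivative flux_dx t x) (at x within {0..L})"
  unfolding flux_def using assms L_pos
  by (auto intro!: derivative_eq_intros u_dx ux_dx ut_dx ub_deriv
      simp: flux_dx_def algebra_simps power2_eq_square)

lemma energy_density_dt_split: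
  assumes t: "t \<in> {0..T}" and x: "x \<in> {0..L}"
  shows "energy_density_dt t x = flux_dx t x
      + (- (exp (- x / L) / L) * ((a\<^sup>2 - (ub x + u t x)\<^sup>2) * (ux t x)\<^sup>2 + (ut t x)\<^sup>2) + remainder t x)"
proof -
  have "utt t x = Fsrc a \<theta> (ub x) (ubx x) (u t x) (ux t x) (ut t x) - 2 * (ub x + u t x) * utx t x
      + (a\<^sup>2 - (ub x + u t x)\<^sup>2) * uxx t x"
    using pde[OF t x] by (simp add: algebra_simps)
  thus ?thesis
    unfolding energy_density_dt_def flux_dx_def remainder_def mixed_partials[OF t x]
    by (intro energy_density_dt_eq[where V = "ub x + u t x" and A = "a\<^sup>2 - (ub x + u t x)\<^sup>2"
        and c = "ub x" and w = "u t x"]) (use L_pos in simp_all)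
qed

lemma remainder_le:
  assumes "t \<in> {0..T}" "x \<in> {0..L}"
  shows "remainder t x \<le> \<mu> / K1 * h1_density t x"
proof -
  have "remainder t x \<le> C0_c a \<theta> k * \<epsilon> * h1_density t x"
    unfolding remainder_def h1_density_def
    using small_state.energy_remainder_le[OF small_state_at[OF assms] k_ge_1, of "exp (- x / L)"]
      weight_bounds[OF assms(2)] by simp
  moreover have "C0_c a \<theta> k * \<epsilon> = \<mu> / K1" using constants_pos by simp
  ultimately show ?thesis by simp
qed

text \<open>The weight \<open>exp (- x / L) \<ge> exp (- 1)\<close> turns its own derivative into damping at rate \<open>2 \<mu>\<close>.\<close>

lemma weight_damping_le:
  assumes "t \<in> {0..T}" "x \<in> {0..L}"
  shows "- (exp (- x / L) / L) * ((a\<^sup>2 - (ub x + u t x)\<^sup>2) * (ux t x)\<^sup>2 + (ut t x)\<^sup>2)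
    \<le> - 2 * \<mu> * energy_density t x"
proof -
  define W where "W = (a\<^sup>2 - (ub x + u t x)\<^sup>2) * (ux t x)\<^sup>2 + (ut t x)\<^sup>2"
  have "0 \<le> a\<^sup>2 - (ub x + u t x)\<^sup>2" using sound_speed_pos[OF assms] zero_le_power2[of a] by linarith
  hence "0 \<le> W" unfolding W_def by simp
  have "2 * \<mu> * energy_density t x \<le> 2 * \<mu> * (2 * k * W)"
    using energy_density_bounds(2)[OF assms] constants_pos unfolding W_def by simp
  also have "\<dots> = exp (- 1) / L * W"
    unfolding mu_c_def using k_ge_1 L_pos by (simp add: exp_minus field_simps)
  also have "\<dots> \<le> exp (- x / L) / L * W"
    using weight_bounds[OF assms(2)] \<open>0 \<le> W\<close> L_pos by (intro mult_right_mono divide_right_mono) auto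
  finally show ?thesis unfolding W_def by simp
qed

lemma flux_outflow_le: "t \<in> {0..T} \<Longrightarrow> flux t L \<le> exp 1 * k\<^sup>2 * a\<^sup>2 * (g' t)\<^sup>2"
proof -
  assume t: "t \<in> {0..T}"
  have L: "L \<in> {0..L}" using L_pos by simp
  have "(ub L + u t L)\<^sup>2 \<le> a\<^sup>2"
    using flow_nonneg[OF t L] flow_subsonic[OF t L] a_pos by (intro power_mono) auto
  moreover have e: "exp (- L / L) = exp (- 1)" using L_pos by simp
  ultimately show ?thesis unfolding flux_def ut_outflow[OF t] e
    by (intro flux_quadratic_le) (use flow_nonneg[OF t L] k_ge_1 in auto)
qed

lemma flux_feedback_nonneg: "t \<in> {0..T} \<Longrightarrow> 0 \<le> flux t 0"
proof -
  assume t: "t \<in> {0..T}"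
  have x: "0 \<in> {0..L}" using L_pos by simp
  define V where "V = ub 0 + u t 0"
  have "k * (3/4 * a\<^sup>2) \<le> k * (a\<^sup>2 - V\<^sup>2)"
    using sound_speed_pos[OF t x] k_ge_1 unfolding V_def by (intro mult_left_mono) auto
  moreover have "3/4 * k * a\<^sup>2 = k * (3/4 * a\<^sup>2)" by simp
  ultimately have "a + 1 \<le> k * (a\<^sup>2 - V\<^sup>2)" using k_large by linarith
  hence "k * (a + 1) \<le> k * (k * (a\<^sup>2 - V\<^sup>2))"
    using k_ge_1 by (intro mult_left_mono) auto
  moreover have "2 * k * V \<le> k * a" using flow_subsonic[OF t x] k_ge_1 unfolding V_def by simp
  moreover have "k * (a + 1) = k * a + k" "k * (k * (a\<^sup>2 - V\<^sup>2)) = k\<^sup>2 * (a\<^sup>2 - V\<^sup>2)"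
    by (simp_all add: algebra_simps power2_eq_square)
  ultimately have "2 * k * V + 1 \<le> k\<^sup>2 * (a\<^sup>2 - V\<^sup>2)" using k_ge_1 by linarith
  from flux_quadratic_nonneg[OF this, of "ut t 0"] show ?thesis
    unfolding flux_def feedback[OF t] V_def by simp
qed

lemma E1_has_derivative:
  assumes t: "t \<in> {0..T}"
  shows "((\<lambda>\<tau>. E1 a L k ub u ux ut \<tau>) has_real_derivative integral {0..L} (energy_density_dt t))
    (at t within {0..T})"
proof -
  have "((\<lambda>\<tau>. integral (cbox 0 L) (energy_density \<tau>)) has_field_derivative
      integral (cbox 0 L) (energy_density_dt t)) (at t within {0..T})"
  proof (rule leibniz_rule_field_derivative)
    show "((\<lambda>\<tau>. energy_density \<tau> x) has_field_derivative energy_density_dt \<tau> x) (at \<tau> within {0..T})"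
      if "\<tau> \<in> {0..T}" "x \<in> cbox 0 L" for \<tau> x
      using has_derivative_energy_density that by simp
    show "energy_density \<tau> integrable_on cbox 0 L" if "\<tau> \<in> {0..T}" for \<tau>
      using integrable_on_slice[OF continuous_on_densities(1) that] by simp
    show "continuous_on ({0..T} \<times> cbox 0 L) (\<lambda>(\<tau>, x). energy_density_dt \<tau> x)"
      using continuous_on_densities(2) by (simp add: case_prod_beta')
  qed (use t in auto)
  thus ?thesis unfolding E1_eq_integral by simp
qed

lemma h1_integral_le:
  assumes t: "t \<in> {0..T}"
  shows "integral {0..L} (h1_density t) \<le> 2 * L * (g t)\<^sup>2 + K1 * E1 a L k ub u ux ut t"
proof -
  have sq: "(\<lambda>x. (f t x)\<^sup>2) integrable_on {0..L}"
    if "continuous_on ({0..T} \<times> {0..L}) (\<lambda>p. f (fst p) (snd p))" for f :: "real \<Rightarrow> real \<Rightarrow> real"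
    by (intro integrable_continuous_interval continuous_intros continuous_on_slice[OF that t])
  define IU where "IU = integral {0..L} (\<lambda>x. (u t x)\<^sup>2)"
  define IX where "IX = integral {0..L} (\<lambda>x. (ux t x)\<^sup>2)"
  define IY where "IY = integral {0..L} (\<lambda>x. (ut t x)\<^sup>2)"
  have "integral {0..L} (h1_density t) = IU + IX + IY"
    unfolding h1_density_def IU_def IX_def IY_def
    using integral_add[OF integrable_add[OF sq[OF continuous_on_fields(1)] sq[OF continuous_on_fields(3)]]
        sq[OF continuous_on_fields(2)]]
      integral_add[OF sq[OF continuous_on_fields(1)] sq[OF continuous_on_fields(3)]]
    by simp
  moreover have "IU \<le> 2 * L * (u t L)\<^sup>2 + 2 * L\<^sup>2 * IX"
    unfolding IU_def IX_def
    by (rule integral_power2_le_endpoint[OF L_pos continuous_on_slice[OF continuous_on_fields(3) t]])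
      (use u_dx[OF t] in auto)
  hence "IU \<le> 2 * L * (g t)\<^sup>2 + 2 * L\<^sup>2 * IX" using outflow[OF t] by simp
  moreover have M1: "M1_c a k * (IX + IY) \<le> E1 a L k ub u ux ut t"
  proof -
    have "integral {0..L} (\<lambda>x. M1_c a k * ((ux t x)\<^sup>2 + (ut t x)\<^sup>2)) \<le> integral {0..L} (energy_density t)"
      using energy_density_bounds(1)[OF t] integrable_on_slice[OF continuous_on_densities(1) t]
        integrable_on_mult_right[OF integrable_add[OF sq[OF continuous_on_fields(3)]
          sq[OF continuous_on_fields(2)]]]
      by (intro integral_le) auto
    thus ?thesis unfolding E1_eq_integral IX_def IY_def
      using integral_add[OF sq[OF continuous_on_fields(3)] sq[OF continuous_on_fields(2)]] by simp
  qed
  moreover have "IX + IY + 2 * L\<^sup>2 * IX + 2 * L\<^sup>2 * IY = K1 * (M1_c a k * (IX + IY))"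
    unfolding K1_c_def using constants_pos by (simp add: field_simps)
  moreover have "K1 * (M1_c a k * (IX + IY)) \<le> K1 * E1 a L k ub u ux ut t"
    using M1 constants_pos by (intro mult_left_mono) auto
  moreover have "0 \<le> 2 * L\<^sup>2 * IY" unfolding IY_def
    using sq[OF continuous_on_fields(2)] by (simp add: integral_nonneg)
  ultimately show ?thesis by linarith
qed

lemma energy_density_dt_le:
  assumes "t \<in> {0..T}" "x \<in> {0..L}"
  shows "energy_density_dt t x - flux_dx t x \<le> - 2 * \<mu> * energy_density t x + \<mu> / K1 * h1_density t x"
  using energy_density_dt_split[OF assms] remainder_le[OF assms] weight_damping_le[OF assms] by linarith

lemma E1_derivative_le:
  assumes t: "t \<in> {0..T}"
  shows "integral {0..L} (energy_density_dt t)
    \<le> - \<mu> * E1 a L k ub u ux ut t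
       + (4/3 * exp 1 * a\<^sup>2 * k\<^sup>2 + 1 / (2 * exp 1 * K1 * k)) * (\<bar>g t\<bar>\<^sup>2 + \<bar>g' t\<bar>\<^sup>2)"
proof -
  define E where "E = integral {0..L} (energy_density t)"
  define Cg where "Cg = 4/3 * exp 1 * a\<^sup>2 * k\<^sup>2 + 1 / (2 * exp 1 * K1 * k)"
  have iD: "energy_density_dt t integrable_on {0..L}" and iP: "flux_dx t integrable_on {0..L}"
    using integrable_on_slice[OF continuous_on_densities(2) t]
      integrable_on_slice[OF continuous_on_densities(3) t] by auto
  have iH: "(\<lambda>x. - 2 * \<mu> * energy_density t x) integrable_on {0..L}"
    by (rule integrable_on_mult_right[OF integrable_on_slice[OF continuous_on_densities(1) t]])
  have iQ: "(\<lambda>x. \<mu> / K1 * h1_density t x) integrable_on {0..L}"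
    by (rule integrable_on_mult_right[OF integrable_on_slice[OF continuous_on_densities(4) t]])
  have "integral {0..L} (energy_density_dt t)
      = integral {0..L} (flux_dx t) + integral {0..L} (\<lambda>x. energy_density_dt t x - flux_dx t x)"
    using integral_diff[OF iD iP] by simp
  moreover have "integral {0..L} (flux_dx t) = flux t L - flux t 0"
    by (rule integral_real_derivative) (use has_derivative_flux t L_pos in auto)
  moreover have "integral {0..L} (\<lambda>x. energy_density_dt t x - flux_dx t x)
      \<le> - 2 * \<mu> * E + \<mu> / K1 * integral {0..L} (h1_density t)"
  proof -
    have "integral {0..L} (\<lambda>x. energy_density_dt t x - flux_dx t x)
        \<le> integral {0..L} (\<lambda>x. - 2 * \<mu> * energy_density t x + \<mu> / K1 * h1_density t x)"
      by (rule integral_le[OF integrable_diff[OF iD iP] integrable_add[OF iH iQ] energy_density_dt_le[OF t]])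
    thus ?thesis unfolding E_def by (simp only: integral_add[OF iH iQ] integral_mult_right)
  qed
  moreover have "\<mu> / K1 * integral {0..L} (h1_density t) \<le> \<mu> / K1 * (2 * L * (g t)\<^sup>2 + K1 * E)"
    using h1_integral_le[OF t, unfolded E1_eq_integral] constants_pos unfolding E_def
    by (intro mult_left_mono) auto
  moreover have "\<mu> / K1 * (2 * L * (g t)\<^sup>2 + K1 * E) = 1 / (2 * exp 1 * K1 * k) * (g t)\<^sup>2 + \<mu> * E"
    unfolding mu_c_def using constants_pos L_pos k_ge_1 by (simp add: field_simps)
  ultimately have "integral {0..L} (energy_density_dt t)
      \<le> exp 1 * k\<^sup>2 * a\<^sup>2 * (g' t)\<^sup>2 - \<mu> * E + 1 / (2 * exp 1 * K1 * k) * (g t)\<^sup>2"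
    using flux_outflow_le[OF t] flux_feedback_nonneg[OF t] by linarith
  moreover have "exp 1 * k\<^sup>2 * a\<^sup>2 * (g' t)\<^sup>2 \<le> Cg * (g' t)\<^sup>2"
    and "1 / (2 * exp 1 * K1 * k) * (g t)\<^sup>2 \<le> Cg * (g t)\<^sup>2"
  proof -
    have "0 \<le> exp 1 * k\<^sup>2 * a\<^sup>2" "0 \<le> 1 / (2 * exp 1 * K1 * k)" using constants_pos k_ge_1 by auto
    moreover have "4/3 * exp 1 * a\<^sup>2 * k\<^sup>2 = 4/3 * (exp 1 * k\<^sup>2 * a\<^sup>2)" by simp
    ultimately have c: "exp 1 * k\<^sup>2 * a\<^sup>2 \<le> Cg" "1 / (2 * exp 1 * K1 * k) \<le> Cg"
      unfolding Cg_def by linarith+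
    show "exp 1 * k\<^sup>2 * a\<^sup>2 * (g' t)\<^sup>2 \<le> Cg * (g' t)\<^sup>2"
      by (rule mult_right_mono[OF c(1) zero_le_power2])
    show "1 / (2 * exp 1 * K1 * k) * (g t)\<^sup>2 \<le> Cg * (g t)\<^sup>2"
      by (rule mult_right_mono[OF c(2) zero_le_power2])
  qed
  moreover have "Cg * (\<bar>g t\<bar>\<^sup>2 + \<bar>g' t\<bar>\<^sup>2) = Cg * (g t)\<^sup>2 + Cg * (g' t)\<^sup>2"
    by (simp add: distrib_left)
  ultimately show ?thesis unfolding E_def Cg_def[symmetric] E1_eq_integral by linarith
qed

lemma H1sq_le_integral_E1:
  assumes t: "0 \<le> t0" "t0 \<le> t1" "t1 \<le> T" and g0: "\<And>t. t \<in> {t0..t1} \<Longrightarrow> g t = 0"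
  shows "H1sq t0 t1 L u ux ut \<le> K1 * integral {t0..t1} (\<lambda>t. E1 a L k ub u ux ut t)"
proof -
  have sub: "{t0..t1} \<subseteq> {0..T}" using t by auto
  have cQ: "continuous_on (cbox (t0, 0) (t1, L)) (\<lambda>p. h1_density (fst p) (snd p))"
    by (rule continuous_on_subset[OF continuous_on_densities(4)]) (use sub in \<open>auto simp: cbox_Pair_eq\<close>)
  have "H1sq t0 t1 L u ux ut = integral (cbox (t0, 0) (t1, L)) (\<lambda>p. h1_density (fst p) (snd p))"
    unfolding H1sq_def h1_density_def cbox_Pair_eq box_real(2) by (simp add: case_prod_beta')
  also have "\<dots> = integral {t0..t1} (\<lambda>t. integral {0..L} (h1_density t))"
    using integral_prod_continuous[OF cQ] by simp
  also have "\<dots> \<le> integral {t0..t1} (\<lambda>t. K1 * E1 a L k ub u ux ut t)"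
  proof (rule integral_le)
    have "continuous_on {t0..t1} (\<lambda>t. integral (cbox 0 L) (h1_density t))"
      by (rule integral_continuous_on_param)
        (use continuous_on_densities(4) sub in \<open>auto simp: case_prod_beta' intro: continuous_on_subset\<close>)
    thus "(\<lambda>t. integral {0..L} (h1_density t)) integrable_on {t0..t1}"
      by (simp add: integrable_continuous_interval)
    have "continuous_on {0..T} (\<lambda>t. E1 a L k ub u ux ut t)"
      using E1_has_derivative by (rule DERIV_continuous_on)
    thus "(\<lambda>t. K1 * E1 a L k ub u ux ut t) integrable_on {t0..t1}"
      by (intro integrable_continuous_interval continuous_intros continuous_on_subset[OF _ sub])
    show "integral {0..L} (h1_density t) \<le> K1 * E1 a L k ub u ux ut t" if "t \<in> {t0..t1}" for t
      using h1_integral_le[of t] g0[OF that] that sub by auto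
  qed
  finally show ?thesis by simp
qed

lemma window_energy_bound:
  assumes Tp: "0 < Tp" "Tp < T" and \<nu>: "\<mu> < \<nu>" and C\<nu>: "0 < C\<nu>"
    and g_decay: "\<And>t. t \<in> {Tp<..<T} \<Longrightarrow>
        integral {t - Tp..t} (\<lambda>\<tau>. \<bar>g \<tau>\<bar>\<^sup>2 + \<bar>g' \<tau>\<bar>\<^sup>2) \<le> C\<nu> * exp (- \<nu> * t)"
    and t: "t \<in> {Tp..T}"
  shows "Een a L k Tp ub u ux ut t \<le> exp (- \<mu> * (t - Tp)) * (Een a L k Tp ub u ux ut Tp
      + (4/3 * exp 1 * a\<^sup>2 * k\<^sup>2 + 1 / (2 * exp 1 * K1 * k)) * C\<nu> / (\<nu> - \<mu>))"
  unfolding Een_def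
proof (rule window_energy_decay[OF Tp constants_pos(2) \<nu> _ C\<nu> E1_has_derivative _ E1_derivative_le g_decay t])
  show "continuous_on {0..T} (\<lambda>\<tau>. \<bar>g \<tau>\<bar>\<^sup>2 + \<bar>g' \<tau>\<bar>\<^sup>2)"
    by (intro continuous_intros g_cont g'_cont)
  show "0 \<le> 4/3 * exp 1 * a\<^sup>2 * k\<^sup>2 + 1 / (2 * exp 1 * K1 * k)"
    using constants_pos k_ge_1 by simp
qed

end

lemma feedback_gain_large:
  fixes a k :: real
  assumes "0 < a" "4/3 * (1/a + 1/a\<^sup>2) \<le> k"
  shows "a + 1 \<le> 3/4 * k * a\<^sup>2"
proof -
  have "4/3 * (1/a + 1/a\<^sup>2) * (3/4 * a\<^sup>2) \<le> k * (3/4 * a\<^sup>2)"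
    using assms by (intro mult_right_mono) auto
  moreover have "4/3 * (1/a + 1/a\<^sup>2) * (3/4 * a\<^sup>2) = a + 1"
    using assms by (simp add: field_simps power2_eq_square)
  ultimately show ?thesis by simp
qed

lemma stationary_state_nondecreasing:
  fixes ub ubx :: "real \<Rightarrow> real" and \<theta> a L :: real
  assumes "0 \<le> \<theta>" "0 < a"
    and ub_deriv: "\<And>x. x \<in> {0..L} \<Longrightarrow> (ub has_real_derivative ubx x) (at x within {0..L})"
    and ub_ode: "\<And>x. x \<in> {0..L} \<Longrightarrow> ubx x = \<theta> / 2 * (\<bar>ub x\<bar> * (ub x)\<^sup>2) / (a\<^sup>2 - (ub x)\<^sup>2)"
    and ub_pos: "\<And>x. x \<in> {0..L} \<Longrightarrow> ub x > 0" and ub_le: "\<And>x. x \<in> {0..L} \<Longrightarrow> ub x \<le> a / 4"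
  shows "\<And>x. x \<in> {0..L} \<Longrightarrow> 0 \<le> ubx x" and "\<And>x. x \<in> {0..L} \<Longrightarrow> ub 0 \<le> ub x"
proof -
  show ubx_nonneg: "0 \<le> ubx x" if x: "x \<in> {0..L}" for x
  proof -
    have "(ub x)\<^sup>2 < a\<^sup>2" using ub_pos[OF x] ub_le[OF x] assms(2) by (intro power_strict_mono) auto
    thus ?thesis using ub_ode[OF x] assms(1) by simp
  qed
  show "ub 0 \<le> ub x" if "x \<in> {0..L}" for x
    using nondecreasing_of_nonneg_derivative[OF ub_deriv ubx_nonneg that] .
qed

theorem theorem2:
  fixes a \<theta> L lam k Tp T \<nu> C\<nu> :: real
    and ub ubx :: "real \<Rightarrow> real"
    and b bt btt :: "real \<Rightarrow> 'w \<Rightarrow> real" and \<omega> :: 'w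
    and u ut ux utt utx uxt uxx :: "real \<Rightarrow> real \<Rightarrow> real"
    and \<phi> \<psi> :: "real \<Rightarrow> real"
  assumes a_pos: "a > 0" and theta_nn: "\<theta> \<ge> 0" and L_pos: "L > 0"
    and lam: "1/2 < lam" "lam < 1"
    and k_ge: "k \<ge> Max {1, 4/3 * (1/a + 1/a\<^sup>2), 1 / (lam * a)}"
    \<comment> \<open>stationary state: ubar in C^1([0,L]), positive, solving the ODE\<close>
    and ub_C1: "continuous_on {0..L} ub" "continuous_on {0..L} ubx"
    and ub_deriv: "\<And>x. x \<in> {0..L} \<Longrightarrow> (ub has_real_derivative ubx x) (at x within {0..L})"
    and ub_ode: "\<And>x. x \<in> {0..L} \<Longrightarrow>
        ubx x = \<theta> / 2 * (\<bar>ub x\<bar> * (ub x)\<^sup>2) / (a\<^sup>2 - (ub x)\<^sup>2)"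
    and ub_pos: "\<And>x. x \<in> {0..L} \<Longrightarrow> ub x > 0"
    and ub_bound: "\<And>x. x \<in> {0..L} \<Longrightarrow>
        ub x \<le> Min {1, 1 / (4 * k * exp 1), (1 - lam) * a / 2,
                    mu_c L k / (C0_c a \<theta> k * K1_c a L k)}"
    and ubx_bound: "\<And>x. x \<in> {0..L} \<Longrightarrow>
        ubx x \<le> min 1 (mu_c L k / (C0_c a \<theta> k * K1_c a L k))"
    and Tp_pos: "Tp > 0" and T_gt: "T > Tp"
    \<comment> \<open>boundary data b(.,omega) in C^2([0,T])\<close>
    and b_C2: "continuous_on {0..T} (\<lambda>t. b t \<omega>)" "continuous_on {0..T} (\<lambda>t. bt t \<omega>)"
              "continuous_on {0..T} (\<lambda>t. btt t \<omega>)"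
    and b_deriv: "\<And>t. t \<in> {0..T} \<Longrightarrow> ((\<lambda>s. b s \<omega>) has_real_derivative bt t \<omega>) (at t within {0..T})"
    and bt_deriv: "\<And>t. t \<in> {0..T} \<Longrightarrow> ((\<lambda>s. bt s \<omega>) has_real_derivative btt t \<omega>) (at t within {0..T})"
    \<comment> \<open>u in C^2([0,T] x [0,L]) with the given partial derivatives\<close>
    and u_cont: "continuous_on ({0..T} \<times> {0..L}) (\<lambda>(t, x). u t x)"
    and ut_cont: "continuous_on ({0..T} \<times> {0..L}) (\<lambda>(t, x). ut t x)"
    and ux_cont: "continuous_on ({0..T} \<times> {0..L}) (\<lambda>(t, x). ux t x)"
    and utt_cont: "continuous_on ({0..T} \<times> {0..L}) (\<lambda>(t, x). utt t x)"
    and utx_cont: "continuous_on ({0..T} \<times> {0..L}) (\<lambda>(t, x). utx t x)"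
    and uxt_cont: "continuous_on ({0..T} \<times> {0..L}) (\<lambda>(t, x). uxt t x)"
    and uxx_cont: "continuous_on ({0..T} \<times> {0..L}) (\<lambda>(t, x). uxx t x)"
    and u_dt: "\<And>t x. t \<in> {0..T} \<Longrightarrow> x \<in> {0..L} \<Longrightarrow>
        ((\<lambda>s. u s x) has_real_derivative ut t x) (at t within {0..T})"
    and u_dx: "\<And>t x. t \<in> {0..T} \<Longrightarrow> x \<in> {0..L} \<Longrightarrow>
        ((\<lambda>y. u t y) has_real_derivative ux t x) (at x within {0..L})"
    and ut_dt: "\<And>t x. t \<in> {0..T} \<Longrightarrow> x \<in> {0..L} \<Longrightarrow>
        ((\<lambda>s. ut s x) has_real_derivative utt t x) (at t within {0..T})"
    and ut_dx: "\<And>t x. t \<in> {0..T} \<Longrightarrow> x \<in> {0..L} \<Longrightarrow>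
        ((\<lambda>y. ut t y) has_real_derivative utx t x) (at x within {0..L})"
    and ux_dt: "\<And>t x. t \<in> {0..T} \<Longrightarrow> x \<in> {0..L} \<Longrightarrow>
        ((\<lambda>s. ux s x) has_real_derivative uxt t x) (at t within {0..T})"
    and ux_dx: "\<And>t x. t \<in> {0..T} \<Longrightarrow> x \<in> {0..L} \<Longrightarrow>
        ((\<lambda>y. ux t y) has_real_derivative uxx t x) (at x within {0..L})"
    \<comment> \<open>the system\<close>
    and init: "\<And>x. x \<in> {0..L} \<Longrightarrow> u 0 x = \<phi> x" "\<And>x. x \<in> {0..L} \<Longrightarrow> ut 0 x = \<psi> x"
    and pde: "\<And>t x. t \<in> {0..T} \<Longrightarrow> x \<in> {0..L} \<Longrightarrow>
        utt t x + 2 * (ub x + u t x) * utx t x - (a\<^sup>2 - (ub x + u t x)\<^sup>2) * uxx t x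
          = Fsrc a \<theta> (ub x) (ubx x) (u t x) (ux t x) (ut t x)"
    and bc0: "\<And>t. t \<in> {0..T} \<Longrightarrow> ux t 0 = k * ut t 0"
    and bcL: "\<And>t. t \<in> {0..T} \<Longrightarrow> u t L = b t \<omega>"
    \<comment> \<open>smallness of the solution\<close>
    and u_small: "\<And>t x. t \<in> {0..T} \<Longrightarrow> x \<in> {0..L} \<Longrightarrow>
        \<bar>u t x\<bar> \<le> Min {ub 0, (1 - lam) * a / 2, 1 / (4 * k * exp 1)}"
    and u_small2: "\<And>t x. t \<in> {0..T} \<Longrightarrow> x \<in> {0..L} \<Longrightarrow>
        Max {\<bar>u t x\<bar>, \<bar>ux t x\<bar>, \<bar>ut t x\<bar>} \<le> min 1 (mu_c L k / (C0_c a \<theta> k * K1_c a L k))"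
    \<comment> \<open>decay of the boundary data\<close>
    and nu_gt: "\<nu> > mu_c L k" and Cnu_pos: "C\<nu> > 0"
    and b_decay: "\<And>t. t \<in> {Tp<..<T} \<Longrightarrow>
        integral {t - Tp..t} (\<lambda>\<tau>. \<bar>b \<tau> \<omega>\<bar>\<^sup>2 + \<bar>bt \<tau> \<omega>\<bar>\<^sup>2) \<le> C\<nu> * exp (- \<nu> * t)"
  shows "(\<forall>t \<in> {Tp<..<T}.
            Een a L k Tp ub u ux ut t
              \<le> exp (- mu_c L k * (t - Tp)) *
                 (Een a L k Tp ub u ux ut Tp
                  + ((4/3 * exp 1 * a\<^sup>2 * k\<^sup>2 + 1 / (2 * exp 1 * K1_c a L k * k)) * C\<nu>)
                    / (\<nu> - mu_c L k)))
       \<and> ((\<forall>t \<in> {T - Tp..T}. b t \<omega> = 0) \<longrightarrow>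
            H1sq (T - Tp) T L u ux ut
              \<le> K1_c a L k * exp (- mu_c L k * (T - Tp)) *
                 (Een a L k Tp ub u ux ut Tp
                  + ((4/3 * exp 1 * a\<^sup>2 * k\<^sup>2 + 1 / (2 * exp 1 * K1_c a L k * k)) * C\<nu>)
                    / (\<nu> - mu_c L k)))"
proof -
  have k: "1 \<le> k" "4/3 * (1/a + 1/a\<^sup>2) \<le> k" using k_ge by auto
  have lam_a: "(1 - lam) * a / 2 \<le> a / 4" using lam a_pos by (simp add: field_simps)
  have ub_le: "ub x \<le> 1" "ub x \<le> (1 - lam) * a / 2" "ub x \<le> mu_c L k / (C0_c a \<theta> k * K1_c a L k)"
    if "x \<in> {0..L}" for x
    using ub_bound[OF that] by auto
  have ub_small: "ub x \<le> min 1 (mu_c L k / (C0_c a \<theta> k * K1_c a L k))" if "x \<in> {0..L}" for x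
    using ub_le[OF that] by simp
  have ub_subsonic: "ub x \<le> a / 4" if "x \<in> {0..L}" for x
    using ub_le(2)[OF that] lam_a by linarith
  have ubx_nonneg: "0 \<le> ubx x" and ub_mono: "ub 0 \<le> ub x" if "x \<in> {0..L}" for x
    by (rule stationary_state_nondecreasing;
        fact theta_nn a_pos ub_deriv ub_ode ub_pos ub_subsonic that)+
  have u_le_ub: "\<bar>u t x\<bar> \<le> ub x" if "t \<in> {0..T}" "x \<in> {0..L}" for t x
    using u_small[OF that] ub_mono[OF that(2)] by auto
  have flow_subsonic: "ub x + u t x \<le> a / 2" if "t \<in> {0..T}" "x \<in> {0..L}" for t x
  proof -
    have "\<bar>u t x\<bar> \<le> (1 - lam) * a / 2" using u_small[OF that] by auto
    thus ?thesis using ub_le(2)[OF that(2)] lam_a by linarith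
  qed
  have T_pos: "0 < T" using Tp_pos T_gt by simp
  interpret gas_flow_solution a \<theta> L k T ub ubx u ut ux utt utx uxt uxx "\<lambda>t. b t \<omega>" "\<lambda>t. bt t \<omega>"
    by unfold_locales (fact a_pos theta_nn L_pos T_pos k(1) feedback_gain_large[OF a_pos k(2)]
        ub_C1 ub_deriv ub_pos ub_small ub_subsonic ubx_nonneg ubx_bound u_le_ub flow_subsonic u_small2
        u_cont ut_cont ux_cont utt_cont utx_cont uxt_cont uxx_cont u_dt u_dx ut_dt ut_dx ux_dt ux_dx
        pde bc0 bcL b_deriv b_C2)+
  have decay: "Een a L k Tp ub u ux ut t \<le> exp (- mu_c L k * (t - Tp)) * (Een a L k Tp ub u ux ut Tp
      + (4/3 * exp 1 * a\<^sup>2 * k\<^sup>2 + 1 / (2 * exp 1 * K1_c a L k * k)) * C\<nu> / (\<nu> - mu_c L k))"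
    if "t \<in> {Tp..T}" for t
    by (rule window_energy_bound[OF Tp_pos T_gt nu_gt Cnu_pos b_decay that])
  have "H1sq (T - Tp) T L u ux ut \<le> K1_c a L k * Een a L k Tp ub u ux ut T"
    if "\<forall>t \<in> {T - Tp..T}. b t \<omega> = 0"
    using H1sq_le_integral_E1[of "T - Tp" T] that Tp_pos T_gt unfolding Een_def by simp
  with decay[of T] constants_pos T_gt show ?thesis
    using decay by (auto intro: order_trans mult_left_mono simp: mult.assoc)
qed

end
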